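(* Let $S$ be a set of $n$ points in the plane in convex position. Then the number of ordered ncp partitions that $S$ admits is $\mathcal{O}^*(4.642126305^n)$.
   Context: A non-crossing path partition (ncp partition) of a planar point set $S$ is a graph with vertex set $S$ and straight-line edges, no two of which cross, every connected component of which is a path; isolated vertices (singletons) are allowed and regarded as paths of length $0$. For $S$ a set of $n$ points in convex position numbered clockwise from $1$ to $n$, an ordered ncp partition is an ncp partition of $S$ such that whenever $i<j$ are the two endpoints of a path, no endpoint of any other path lies strictly between $i$ and $j$ (in this numbering). The notation $\mathcal{O}^*(c^n)$ means $O(p(n)\,c^n)$ for some polynomial $p$, i.e. polynomial factors are neglected. *)

theory Defs
  imports "HOL-Analysis.Analysis"
begin

type_synonym point = "real \<times> real"

definition convex_position :: "point set \<Rightarrow> bool" where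
  "convex_position S \<longleftrightarrow> (\<forall>p\<in>S. p \<notin> convex hull (S - {p}))"

text \<open>Orientation determinant; negative means a, b, c is a clockwise turn.\<close>
definition orient :: "point \<Rightarrow> point \<Rightarrow> point \<Rightarrow> real" where
  "orient a b c = (fst b - fst a) * (snd c - snd a) - (snd b - snd a) * (fst c - fst a)"

definition clockwise_numbering :: "nat \<Rightarrow> (nat \<Rightarrow> point) \<Rightarrow> point set \<Rightarrow> bool" where
  "clockwise_numbering n num S \<longleftrightarrow> bij_betw num {1..n} S \<and>
     (\<forall>i j k. 1 \<le> i \<and> i < j \<and> j < k \<and> k \<le> n \<longrightarrow> orient (num i) (num j) (num k) < 0)"

definition path_edges :: "'a list \<Rightarrow> 'a set set" where
  "path_edges vs = {{vs ! i, vs ! Suc i} | i. Suc i < length vs}"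

text \<open>P is a decomposition of S into vertex-disjoint paths (singletons allowed)
whose edges are exactly E; so the graph (S, E) has exactly these paths as components.\<close>
definition path_decomposition :: "'a set \<Rightarrow> 'a set set \<Rightarrow> 'a list set \<Rightarrow> bool" where
  "path_decomposition S E P \<longleftrightarrow>
     (\<forall>vs\<in>P. vs \<noteq> [] \<and> distinct vs) \<and>
     (\<forall>vs\<in>P. \<forall>ws\<in>P. vs \<noteq> ws \<longrightarrow> set vs \<inter> set ws = {}) \<and>
     (\<Union>vs\<in>P. set vs) = S \<and>
     E = (\<Union>vs\<in>P. path_edges vs)"

definition non_crossing :: "point set set \<Rightarrow> bool" where
  "non_crossing E \<longleftrightarrow>
     (\<forall>e1\<in>E. \<forall>e2\<in>E. e1 \<noteq> e2 \<longrightarrow> convex hull e1 \<inter> convex hull e2 \<subseteq> e1 \<inter> e2)"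

definition ncp_partition :: "point set \<Rightarrow> point set set \<Rightarrow> bool" where
  "ncp_partition S E \<longleftrightarrow> non_crossing E \<and> (\<exists>P. path_decomposition S E P)"

definition ordered_ncp_partition ::
    "point set \<Rightarrow> nat \<Rightarrow> (nat \<Rightarrow> point) \<Rightarrow> point set set \<Rightarrow> bool" where
  "ordered_ncp_partition S n num E \<longleftrightarrow> non_crossing E \<and>
     (\<exists>P. path_decomposition S E P \<and>
        (\<forall>vs\<in>P. \<forall>ws\<in>P. vs \<noteq> ws \<longrightarrow>
           (let idx = inv_into {1..n} num;
                i = min (idx (hd vs)) (idx (last vs));
                j = max (idx (hd vs)) (idx (last vs))
            in i < j \<longrightarrow>
               (\<forall>x\<in>{hd ws, last ws}. \<not> (i < idx x \<and> idx x < j)))))"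

end

theory Submission
  imports Defs
begin

text \<open>Number the points clockwise. Two straight-line edges then cross exactly when the numbers
  of their endpoints interleave, so an ordered ncp partition becomes a partition of \<open>{1..n}\<close> into
  paths whose edges, seen as chords, do not interleave and whose endpoints satisfy the ordering
  condition. Let \<open>a n\<close> be the largest number of such partitions of an \<open>n\<close>-element set of integers.

  Consider the path through the least vertex. Either it is a single vertex, or every other path
  lies in one of the gaps between consecutive vertices of it, the gaps being partitioned
  independently, and the gaps following its lower endpoint and the vertices between its endpoints
  are empty. The path itself is determined by its vertex set, the numbers \<open>l, p, r\<close> of its
  vertices below, between and above its endpoints, and the positions along the path of the \<open>p\<close>
  vertices between the endpoints, one of \<open>(l + p + r) choose p\<close> choices. For the partial sums
  \<open>T N\<close> of the generating function \<open>\<Sum>n. a n * x ^ n\<close> this yields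
  \<open>T (N + 1) \<le> 1 + x T N + x\<^sup>2 T N / ((1 - x) (1 - x T N / (1 - x))\<^sup>2)\<close>, and at
  \<open>x = 1 / 4.642126305\<close> the right-hand side maps \<open>[0, 1.87511]\<close> into itself, whence
  \<open>a n \<le> 1.87511 * 4.642126305 ^ n\<close>.\<close>

section \<open>Crossing chords\<close>

lemma orient_rotate: "orient a b c = orient b c a"
  and orient_swap: "orient a b c = - orient a c b"
  unfolding orient_def by (auto simp: algebra_simps)

lemma crossing_segments_meet:
  fixes p1 p2 p3 p4 :: point
  assumes "orient p1 p3 p4 < 0" "orient p2 p3 p4 > 0" "orient p1 p2 p3 > 0" "orient p1 p2 p4 < 0"
  shows "closed_segment p1 p2 \<inter> closed_segment p3 p4 \<noteq> {}"
proof -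
  obtain x1 y1 x2 y2 x3 y3 x4 y4
    where P: "p1 = (x1, y1)" "p2 = (x2, y2)" "p3 = (x3, y3)" "p4 = (x4, y4)"
    by (metis surj_pair)
  define A B C D where "A = orient p1 p3 p4" and "B = orient p2 p3 p4"
    and "C = orient p1 p2 p3" and "D = orient p1 p2 p4"
  define t s where "t = A / (A - B)" and "s = C / (C - D)"
  have t01: "0 \<le> t" "t \<le> 1" and s01: "0 \<le> s" "s \<le> 1"
    using assms by (auto simp: t_def s_def A_def B_def C_def D_def divide_simps)
  have "A - B \<noteq> 0" "C - D \<noteq> 0" using assms by (auto simp: A_def B_def C_def D_def)
  then have eq: "(1 - t) *\<^sub>R p1 + t *\<^sub>R p2 = (1 - s) *\<^sub>R p3 + s *\<^sub>R p4"
    unfolding t_def s_def A_def B_def C_def D_def P orient_def by (simp add: field_simps)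
  have "(1 - t) *\<^sub>R p1 + t *\<^sub>R p2 \<in> closed_segment p1 p2"
    using t01 unfolding closed_segment_def by blast
  moreover have "(1 - t) *\<^sub>R p1 + t *\<^sub>R p2 \<in> closed_segment p3 p4"
    using s01 unfolding eq closed_segment_def by blast
  ultimately show ?thesis by blast
qed

definition chords_noncrossing :: "nat set set \<Rightarrow> bool" where
  "chords_noncrossing E \<longleftrightarrow> \<not> (\<exists>a b c d. {a, b} \<in> E \<and> {c, d} \<in> E \<and> a < c \<and> c < b \<and> b < d)"

definition strictly_between :: "nat \<Rightarrow> nat \<Rightarrow> nat \<Rightarrow> bool" where
  "strictly_between v x y \<longleftrightarrow> min x y < v \<and> v < max x y"

definition walk_in :: "'a set set \<Rightarrow> 'a list \<Rightarrow> bool" where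
  "walk_in E zs \<longleftrightarrow> (\<forall>i. Suc i < length zs \<longrightarrow> {zs ! i, zs ! Suc i} \<in> E)"

lemma chords_noncrossing_mono: "chords_noncrossing E \<Longrightarrow> E' \<subseteq> E \<Longrightarrow> chords_noncrossing E'"
  unfolding chords_noncrossing_def by blast

lemma chords_noncrossing_between:
  assumes nc: "chords_noncrossing E" and xy: "{x, y} \<in> E" and uw: "{u, w} \<in> E"
    and "strictly_between u x y" "w \<noteq> x" "w \<noteq> y"
  shows "strictly_between w x y"
proof -
  have *: "x < w \<and> w < y" if h: "{x, y} \<in> E" "x < u" "u < y" "w \<noteq> x" "w \<noteq> y" for x y
  proof (rule ccontr)
    assume "\<not> (x < w \<and> w < y)"
    then consider "w < x" | "y < w" using h(4,5) by linarith
    moreover have "{w, u} \<in> E" using uw by (simp add: insert_commute)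
    ultimately show False using nc h uw unfolding chords_noncrossing_def by cases blast+
  qed
  have "{y, x} \<in> E" using xy by (simp add: insert_commute)
  then show ?thesis
    using *[of x y] *[of y x] xy assms(4-6) unfolding strictly_between_def
    by (auto simp: min_def max_def split: if_splits)
qed

lemma walk_in_take: "walk_in E zs \<Longrightarrow> walk_in E (take k zs)"
  unfolding walk_in_def by auto

lemma walk_in_drop: "walk_in E zs \<Longrightarrow> walk_in E (drop k zs)"
  unfolding walk_in_def by (auto simp: add.commute[of k] dest: spec[of _ "_ + k"])

lemma walk_in_rev: "walk_in E zs \<Longrightarrow> walk_in E (rev zs)"
  unfolding walk_in_def
proof (intro allI impI)
  fix i assume W: "\<forall>i. Suc i < length zs \<longrightarrow> {zs ! i, zs ! Suc i} \<in> E"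
    and i: "Suc i < length (rev zs)"
  define j where "j = length zs - Suc (Suc i)"
  have "Suc j < length zs" using i j_def by auto
  then have "{zs ! j, zs ! Suc j} \<in> E" using W by auto
  moreover have "rev zs ! i = zs ! Suc j" "rev zs ! Suc i = zs ! j"
    using i j_def by (auto simp: rev_nth Suc_diff_Suc)
  ultimately show "{rev zs ! i, rev zs ! Suc i} \<in> E" by (simp add: insert_commute)
qed

lemma walk_in_between:
  assumes w: "walk_in E vs" and "x \<in> set vs" "y \<in> set vs"
  obtains zs where "walk_in E zs" "zs \<noteq> []" "hd zs = x" "last zs = y" "set zs \<subseteq> set vs"
proof -
  obtain i j where ij: "i < length vs" "j < length vs" "vs ! i = x" "vs ! j = y"
    using assms(2,3) by (metis in_set_conv_nth)
  show ?thesis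
  proof (cases "i \<le> j")
    case True
    define zs where "zs = drop i (take (Suc j) vs)"
    have "walk_in E zs" unfolding zs_def using w walk_in_take walk_in_drop by blast
    moreover have "zs \<noteq> []" "hd zs = x" "last zs = y" using True ij
      by (auto simp: zs_def hd_drop_conv_nth last_conv_nth min_def le_Suc_eq Suc_le_eq dest: le_antisym)
    moreover have "set zs \<subseteq> set vs" unfolding zs_def by (meson in_set_dropD in_set_takeD subsetI)
    ultimately show ?thesis using that by blast
  next
    case False
    define zs where "zs = rev (drop j (take (Suc i) vs))"
    have "walk_in E zs" unfolding zs_def using w walk_in_take walk_in_drop walk_in_rev by blast
    moreover have "zs \<noteq> []" "hd zs = x" "last zs = y" using False ij
      by (auto simp: zs_def hd_rev last_rev hd_drop_conv_nth last_conv_nth min_def le_Suc_eq Suc_le_eq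
          dest: le_antisym)
    moreover have "set zs \<subseteq> set vs" unfolding zs_def by (auto dest: in_set_dropD in_set_takeD)
    ultimately show ?thesis using that by blast
  qed
qed

lemma exists_nth_transition:
  assumes "zs \<noteq> []" "P (hd zs)" "\<not> P (last zs)"
  shows "\<exists>i. Suc i < length zs \<and> P (zs ! i) \<and> \<not> P (zs ! Suc i)"
  using assms
proof (induction zs)
  case Nil then show ?case by simp
next
  case (Cons z zs)
  show ?case
  proof (cases "zs = []")
    case True then show ?thesis using Cons by simp
  next
    case False
    show ?thesis
    proof (cases "P (hd zs)")
      case True
      then obtain i where "Suc i < length zs" "P (zs ! i)" "\<not> P (zs ! Suc i)"
        using Cons False by auto
      then show ?thesis by (intro exI[of _ "Suc i"]) auto
    next
      case notP: False
      show ?thesis using Cons notP False by (intro exI[of _ 0]) (auto simp: hd_conv_nth)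
    qed
  qed
qed

lemma walk_stays_between:
  assumes nc: "chords_noncrossing E" and w: "walk_in E zs" and ne: "zs \<noteq> []"
    and e: "{x, y} \<in> E" and "x \<notin> set zs" "y \<notin> set zs" and "strictly_between (hd zs) x y"
  shows "strictly_between (last zs) x y"
proof (rule ccontr)
  assume "\<not> strictly_between (last zs) x y"
  then obtain i where i: "Suc i < length zs" "strictly_between (zs ! i) x y"
    "\<not> strictly_between (zs ! Suc i) x y"
    using exists_nth_transition[of zs "\<lambda>v. strictly_between v x y"] ne assms(7) by auto
  have "{zs ! i, zs ! Suc i} \<in> E" using w i unfolding walk_in_def by auto
  moreover have "zs ! Suc i \<noteq> x" "zs ! Suc i \<noteq> y" using assms(5,6) i(1) nth_mem by metis+
  ultimately show False using chords_noncrossing_between[OF nc e] i by blast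
qed

lemma strictly_between_parity:
  assumes "zs \<noteq> []" "v1 \<notin> set zs" "v2 \<notin> set zs"
    "\<forall>i. Suc i < length zs \<longrightarrow>
       (strictly_between v1 (zs ! i) (zs ! Suc i) \<longleftrightarrow> strictly_between v2 (zs ! i) (zs ! Suc i))"
  shows "strictly_between v1 (hd zs) (last zs) \<longleftrightarrow> strictly_between v2 (hd zs) (last zs)"
  using assms
proof (induction zs)
  case Nil then show ?case by simp
next
  case (Cons z zs)
  show ?case
  proof (cases "zs = []")
    case True then show ?thesis by (auto simp: strictly_between_def)
  next
    case False
    have "\<forall>i. Suc i < length zs \<longrightarrow>
        (strictly_between v1 (zs ! i) (zs ! Suc i) \<longleftrightarrow> strictly_between v2 (zs ! i) (zs ! Suc i))"
      using Cons.prems(4) by (metis Suc_less_eq length_Cons nth_Cons_Suc)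
    then have IH: "strictly_between v1 (hd zs) (last zs) \<longleftrightarrow> strictly_between v2 (hd zs) (last zs)"
      using Cons.IH[OF False] Cons.prems(2,3) by auto
    have h0: "strictly_between v1 z (hd zs) \<longleftrightarrow> strictly_between v2 z (hd zs)"
      using False spec[OF Cons.prems(4), of 0] by (auto simp: hd_conv_nth)
    have "strictly_between v z (last zs) \<longleftrightarrow>
        (strictly_between v z (hd zs) \<noteq> strictly_between v (hd zs) (last zs))"
      if "v \<notin> set (z # zs)" for v
    proof -
      have "v \<noteq> z" "v \<noteq> hd zs" "v \<noteq> last zs" using that False by auto
      then show ?thesis unfolding strictly_between_def by auto
    qed
    then show ?thesis using IH h0 Cons.prems(2,3) False by auto
  qed
qed

text \<open>Otherwise, by parity, some edge of \<open>S1\<close> separates the endpoints of \<open>S2\<close>, and \<open>S2\<close>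
  would have to cross it.\<close>

lemma disjoint_walks_same_side:
  assumes nc: "chords_noncrossing E" and w1: "walk_in E S1" and w2: "walk_in E S2"
    and ne1: "S1 \<noteq> []" and ne2: "S2 \<noteq> []" and dj: "set S1 \<inter> set S2 = {}"
  shows "strictly_between (hd S2) (hd S1) (last S1) \<longleftrightarrow> strictly_between (last S2) (hd S1) (last S1)"
proof (rule ccontr)
  assume b: "\<not> ?thesis"
  have "hd S2 \<notin> set S1" "last S2 \<notin> set S1" using dj ne2 by auto
  then obtain i where i: "Suc i < length S1"
    "strictly_between (hd S2) (S1 ! i) (S1 ! Suc i) \<noteq> strictly_between (last S2) (S1 ! i) (S1 ! Suc i)"
    using strictly_between_parity[of S1 "hd S2" "last S2"] ne1 b by blast
  have e: "{S1 ! i, S1 ! Suc i} \<in> E" using w1 i unfolding walk_in_def by auto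
  have "S1 ! i \<in> set S1" "S1 ! Suc i \<in> set S1" using i(1) by auto
  then have nin: "S1 ! i \<notin> set S2" "S1 ! Suc i \<notin> set S2" using dj by auto
  show False
    using i(2) walk_stays_between[OF nc w2 ne2 e nin]
      walk_stays_between[OF nc walk_in_rev[OF w2] _ e] nin ne2
    by (auto simp: hd_rev last_rev)
qed

section \<open>Chord partitions\<close>

definition endpoints_ordered :: "nat list set \<Rightarrow> bool" where
  "endpoints_ordered P \<longleftrightarrow> (\<forall>vs\<in>P. \<forall>ws\<in>P. vs \<noteq> ws \<longrightarrow>
     (let i = min (hd vs) (last vs); j = max (hd vs) (last vs)
      in i < j \<longrightarrow> (\<forall>x\<in>{hd ws, last ws}. \<not> (i < x \<and> x < j))))"

definition chord_partition :: "nat set \<Rightarrow> nat set set \<Rightarrow> nat list set \<Rightarrow> bool" where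
  "chord_partition V E P \<longleftrightarrow> path_decomposition V E P \<and> chords_noncrossing E \<and> endpoints_ordered P"

definition chord_partitions :: "nat set \<Rightarrow> nat set set set" where
  "chord_partitions V = {E. \<exists>P. chord_partition V E P}"

lemma walk_in_path_edges: "walk_in (path_edges vs) vs"
  unfolding walk_in_def path_edges_def by auto

lemma path_edges_subset: "e \<in> path_edges vs \<Longrightarrow> e \<subseteq> set vs"
  unfolding path_edges_def by auto

lemma path_edges_rev: "path_edges (rev vs) = path_edges vs"
proof -
  have A: "path_edges (rev vs) \<subseteq> path_edges vs" for vs :: "'a list"
  proof
    fix e assume "e \<in> path_edges (rev vs)"
    then obtain i where i: "Suc i < length vs" "e = {rev vs ! i, rev vs ! Suc i}"
      unfolding path_edges_def by auto
    define j where "j = length vs - Suc (Suc i)"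
    have j: "Suc j < length vs" using i j_def by auto
    have "rev vs ! i = vs ! Suc j" "rev vs ! Suc i = vs ! j"
      using i j_def by (auto simp: rev_nth Suc_diff_Suc)
    then have "e = {vs ! j, vs ! Suc j}" using i by auto
    then show "e \<in> path_edges vs" using j unfolding path_edges_def by auto
  qed
  show ?thesis using A[of vs] A[of "rev vs"] by auto
qed

lemma path_edges_map: "path_edges (map g vs) = image g ` path_edges vs"
proof
  show "path_edges (map g vs) \<subseteq> image g ` path_edges vs"
  proof
    fix e assume "e \<in> path_edges (map g vs)"
    then obtain i where i: "Suc i < length vs" "e = {map g vs ! i, map g vs ! Suc i}"
      unfolding path_edges_def by auto
    then have "e = g ` {vs ! i, vs ! Suc i}" by simp
    moreover have "{vs ! i, vs ! Suc i} \<in> path_edges vs" using i unfolding path_edges_def by blast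
    ultimately show "e \<in> image g ` path_edges vs" by blast
  qed
  show "image g ` path_edges vs \<subseteq> path_edges (map g vs)"
  proof
    fix e assume "e \<in> image g ` path_edges vs"
    then obtain i where i: "Suc i < length vs" "e = g ` {vs ! i, vs ! Suc i}"
      unfolding path_edges_def by auto
    then have "e = {map g vs ! i, map g vs ! Suc i}" by simp
    then show "e \<in> path_edges (map g vs)"
      using i unfolding path_edges_def by (intro CollectI exI[of _ i]) simp
  qed
qed

lemma chord_partition_restrict:
  assumes "chord_partition V E P" "Q \<subseteq> P"
  shows "chord_partition (\<Union>vs\<in>Q. set vs) (\<Union>vs\<in>Q. path_edges vs) Q"
proof -
  have pd: "path_decomposition V E P" and nc: "chords_noncrossing E" and eo: "endpoints_ordered P"
    using assms(1) unfolding chord_partition_def by auto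
  have "(\<Union>vs\<in>Q. path_edges vs) \<subseteq> E"
    using pd assms(2) unfolding path_decomposition_def by auto
  moreover have "path_decomposition (\<Union>vs\<in>Q. set vs) (\<Union>vs\<in>Q. path_edges vs) Q"
    using pd assms(2) unfolding path_decomposition_def by (simp add: subset_iff)
  moreover have "endpoints_ordered Q"
    using eo assms(2) unfolding endpoints_ordered_def by (metis subsetD)
  ultimately show ?thesis using chords_noncrossing_mono[OF nc] unfolding chord_partition_def by auto
qed

context
  fixes V E P
  assumes part: "chord_partition V E P"
begin

lemma chord_partition_edges: "E = (\<Union>vs\<in>P. path_edges vs)"
  using part unfolding chord_partition_def path_decomposition_def by auto

lemma chord_partition_split: "vs \<in> P \<Longrightarrow> E = path_edges vs \<union> (\<Union>ws\<in>P - {vs}. path_edges ws)"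
  using chord_partition_edges by blast

lemma chord_partition_walk: "vs \<in> P \<Longrightarrow> walk_in E vs"
  using chord_partition_edges walk_in_path_edges[of vs] unfolding walk_in_def by blast

lemma chord_partition_distinct: "vs \<in> P \<Longrightarrow> distinct vs \<and> vs \<noteq> []"
  using part unfolding chord_partition_def path_decomposition_def by auto

lemma chord_partition_subset: "vs \<in> P \<Longrightarrow> set vs \<subseteq> V"
  using part unfolding chord_partition_def path_decomposition_def by auto

lemma chord_partition_disjoint: "vs \<in> P \<Longrightarrow> ws \<in> P \<Longrightarrow> vs \<noteq> ws \<Longrightarrow> set vs \<inter> set ws = {}"
  using part unfolding chord_partition_def path_decomposition_def by auto

lemma chord_partition_cover: "v \<in> V \<Longrightarrow> \<exists>ws\<in>P. v \<in> set ws"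
  using part unfolding chord_partition_def path_decomposition_def by auto

lemma chord_partition_noncrossing: "chords_noncrossing E"
  using part unfolding chord_partition_def by blast

lemma chord_partition_ordered: "endpoints_ordered P"
  using part unfolding chord_partition_def by blast

end

lemma chord_partitions_subset_Pow: "chord_partitions V \<subseteq> Pow (Pow V)"
proof
  fix E assume "E \<in> chord_partitions V"
  then obtain P where P: "chord_partition V E P" unfolding chord_partitions_def by auto
  then show "E \<in> Pow (Pow V)"
    using chord_partition_edges[OF P] path_edges_subset chord_partition_subset[OF P] by blast
qed

lemma finite_chord_partitions: "finite V \<Longrightarrow> finite (chord_partitions V)"
  using chord_partitions_subset_Pow finite_subset by (metis finite_Pow_iff)

lemma chord_partitions_empty: "chord_partitions {} = {{}}"
proof -
  have "chord_partition {} {} {}"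
    unfolding chord_partition_def path_decomposition_def chords_noncrossing_def endpoints_ordered_def
    by simp
  moreover have "E = {}" if "chord_partition {} E P" for E P
  proof -
    have "P = {}" using that unfolding chord_partition_def path_decomposition_def by auto
    then show ?thesis using chord_partition_edges[OF that] by simp
  qed
  ultimately show ?thesis unfolding chord_partitions_def by auto
qed

section \<open>From ordered ncp partitions to chord partitions\<close>

lemma path_decomposition_map:
  assumes "inj_on f S" "path_decomposition S E P"
  shows "path_decomposition (f ` S) (image f ` E) (map f ` P)"
proof -
  have sub: "set vs \<subseteq> S" if "vs \<in> P" for vs
    using assms(2) that unfolding path_decomposition_def by auto
  then have inj: "inj_on f (set vs \<union> set ws)" if "vs \<in> P" "ws \<in> P" for vs ws
    using that inj_on_subset[OF assms(1)] by (metis Un_subset_iff)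
  have "set (map f vs) \<inter> set (map f ws) = {}" if "vs \<in> P" "ws \<in> P" "vs \<noteq> ws" for vs ws
  proof -
    have "set vs \<inter> set ws = {}" using assms(2) that unfolding path_decomposition_def by auto
    then show ?thesis using inj_on_image_Int[OF inj[OF that(1,2)], of "set vs" "set ws"] by simp
  qed
  moreover have "distinct (map f vs)" if "vs \<in> P" for vs
    using assms(2) that inj[OF that that] unfolding path_decomposition_def by (simp add: distinct_map)
  ultimately show ?thesis
    using assms(2) unfolding path_decomposition_def by (auto simp: path_edges_map)
qed

context
  fixes n :: nat and num :: "nat \<Rightarrow> point" and S :: "point set"
  assumes cw: "clockwise_numbering n num S"
begin

abbreviation "point_index \<equiv> inv_into {1..n} num"

lemma point_index_bij: "bij_betw point_index S {1..n}"
  using cw bij_betw_inv_into unfolding clockwise_numbering_def by blast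

lemma num_point_index: "p \<in> S \<Longrightarrow> num (point_index p) = p"
  using cw bij_betw_inv_into_right unfolding clockwise_numbering_def by metis

lemma num_image_point_index: "f \<subseteq> S \<Longrightarrow> num ` point_index ` f = f"
  using num_point_index by (force simp: image_image)

lemma non_crossing_imp_chords_noncrossing:
  assumes nc: "non_crossing E" and ES: "E \<subseteq> Pow S"
  shows "chords_noncrossing (image point_index ` E)"
  unfolding chords_noncrossing_def
proof clarify
  fix a b c d :: nat and f1 f2
  assume f: "f1 \<in> E" "f2 \<in> E" "{a, b} = point_index ` f1" "{c, d} = point_index ` f2" and abcd: "a < c" "c < b" "b < d"
  have "{a, b} \<subseteq> {1..n}" "{c, d} \<subseteq> {1..n}"
    unfolding f(3,4) using f(1,2) ES point_index_bij unfolding bij_betw_def by auto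
  then have rng: "a \<in> {1..n}" "b \<in> {1..n}" "c \<in> {1..n}" "d \<in> {1..n}" by auto
  have "f1 = num ` {a, b}" "f2 = num ` {c, d}"
    unfolding f(3,4) using num_image_point_index f(1,2) ES by auto
  then have f12: "f1 = {num a, num b}" "f2 = {num c, num d}" by simp_all
  have "inj_on num {1..n}" using cw unfolding clockwise_numbering_def bij_betw_def by blast
  then have "num a \<noteq> num c" "num a \<noteq> num d" "num b \<noteq> num c" "num b \<noteq> num d"
    using rng abcd unfolding inj_on_def by (metis less_irrefl less_trans)+
  then have disj: "f1 \<inter> f2 = {}" and "f1 \<noteq> f2" using f12 by auto
  have cwt: "orient (num i) (num j) (num k) < 0" if "i \<in> {a, b, c, d}" "j \<in> {a, b, c, d}"
    "k \<in> {a, b, c, d}" "i < j" "j < k" for i j k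
    using cw rng that unfolding clockwise_numbering_def by auto
  have "orient (num b) (num c) (num d) = - orient (num c) (num b) (num d)"
    "orient (num a) (num b) (num c) = - orient (num a) (num c) (num b)"
    using orient_rotate orient_swap by metis+
  then have "orient (num a) (num c) (num d) < 0" "orient (num b) (num c) (num d) > 0"
    "orient (num a) (num b) (num c) > 0" "orient (num a) (num b) (num d) < 0"
    using cwt[of a c d] cwt[of c b d] cwt[of a c b] cwt[of a b d] abcd by auto
  then have "convex hull f1 \<inter> convex hull f2 \<noteq> {}"
    using crossing_segments_meet f12 by (simp add: segment_convex_hull)
  moreover have "convex hull f1 \<inter> convex hull f2 \<subseteq> f1 \<inter> f2"
    using nc f \<open>f1 \<noteq> f2\<close> unfolding non_crossing_def by blast
  ultimately show False using disj by blast
qed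

lemma ordered_ncp_partition_imp_chord_partition:
  assumes "ordered_ncp_partition S n num E"
  shows "E \<subseteq> Pow S" and "image point_index ` E \<in> chord_partitions {1..n}"
proof -
  obtain P where pd: "path_decomposition S E P" and ord: "\<forall>vs\<in>P. \<forall>ws\<in>P. vs \<noteq> ws \<longrightarrow>
      (let idx = inv_into {1..n} num;
           i = min (idx (hd vs)) (idx (last vs)); j = max (idx (hd vs)) (idx (last vs))
       in i < j \<longrightarrow> (\<forall>x\<in>{hd ws, last ws}. \<not> (i < idx x \<and> idx x < j)))"
    using assms unfolding ordered_ncp_partition_def by (elim conjE exE) (rule that)
  show ES: "E \<subseteq> Pow S"
  proof
    fix e assume "e \<in> E"
    then obtain vs where vs: "vs \<in> P" "e \<in> path_edges vs"
      using pd unfolding path_decomposition_def by auto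
    have "set vs \<subseteq> S" using pd vs(1) unfolding path_decomposition_def by auto
    then show "e \<in> Pow S" using path_edges_subset[OF vs(2)] by blast
  qed
  have inj: "inj_on point_index S" using point_index_bij bij_betw_def by blast
  have pd': "path_decomposition {1..n} (image point_index ` E) (map point_index ` P)"
    using path_decomposition_map[OF inj pd] point_index_bij unfolding bij_betw_def by simp
  have "\<forall>vs\<in>P. vs \<noteq> []" using pd unfolding path_decomposition_def by simp
  then have "endpoints_ordered (map point_index ` P)"
    using ord unfolding endpoints_ordered_def Let_def by (auto simp: hd_map last_map)
  then show "image point_index ` E \<in> chord_partitions {1..n}"
    using pd' non_crossing_imp_chords_noncrossing assms ES
    unfolding chord_partitions_def chord_partition_def ordered_ncp_partition_def by blast
qed

end

section \<open>The path through the least vertex\<close>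

definition gap :: "nat set \<Rightarrow> nat set \<Rightarrow> nat \<Rightarrow> nat set" where
  "gap V W w = {v\<in>V. w < v \<and> (\<forall>w'\<in>W. w < w' \<longrightarrow> v < w')}"

lemma gap_subset: "gap V W w \<subseteq> V"
  unfolding gap_def by blast

lemma gap_disjoint: "x \<in> gap V W w \<Longrightarrow> w \<in> W \<Longrightarrow> x \<notin> W"
  unfolding gap_def by auto

lemma gap_unique:
  assumes "x \<in> gap V W w1" "x \<in> gap V W w2" "w1 \<in> W" "w2 \<in> W"
  shows "w1 = w2"
  using assms by (cases w1 w2 rule: linorder_cases) (auto simp: gap_def)

lemma gap_cover:
  assumes "finite W" "Min V \<in> W" "finite V" "x \<in> V" "x \<notin> W"
  shows "\<exists>w\<in>W. x \<in> gap V W w"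
proof
  let ?L = "{w\<in>W. w < x}"
  have "Min V < x" using assms by (metis Min_le order_le_less)
  then have L: "finite ?L" "?L \<noteq> {}" using assms(1,2) by auto
  show "Max ?L \<in> W" using Max_in[OF L] by blast
  have "x < w'" if "w' \<in> W" "Max ?L < w'" for w'
  proof (rule ccontr)
    assume "\<not> x < w'"
    then have "w' \<in> ?L" using that(1) assms(5) by (auto simp: not_less order_le_less)
    then show False using Max_ge[OF L(1)] that(2) by fastforce
  qed
  then show "x \<in> gap V W (Max ?L)" using Max_in[OF L] assms(4) unfolding gap_def by auto
qed

lemma gap_empty:
  assumes "b \<in> W" "a \<le> w" "w < b" "\<forall>v\<in>V. a < v \<and> v < b \<longrightarrow> v \<in> W"
  shows "gap V W w = {}"
  using assms unfolding gap_def by force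

text \<open>A set \<open>W \<subseteq> V\<close> together with chord partitions of the gaps it leaves in \<open>V\<close>; the flag
  \<open>fs ! i\<close> demands that the gap after the \<open>i\<close>-th smallest element of \<open>W\<close> be empty.\<close>

definition gap_layouts :: "nat set \<Rightarrow> bool list \<Rightarrow> (nat set \<times> nat set set) set" where
  "gap_layouts V fs = {(W, E'). W \<subseteq> V \<and> card W = length fs \<and> (V \<noteq> {} \<longrightarrow> Min V \<in> W) \<and>
     (\<forall>i<length fs. fs ! i \<longrightarrow> gap V W (sorted_list_of_set W ! i) = {}) \<and>
     (\<exists>Eg. (\<forall>w\<in>W. Eg w \<in> chord_partitions (gap V W w)) \<and> E' = (\<Union>w\<in>W. Eg w))}"

definition empty_gap_flags :: "nat \<Rightarrow> nat \<Rightarrow> nat \<Rightarrow> bool list" where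
  "empty_gap_flags l p r = map (\<lambda>i. l \<le> i \<and> i \<le> l + p) [0..<l + p + r + 2]"

lemma length_empty_gap_flags: "length (empty_gap_flags l p r) = l + p + r + 2"
  unfolding empty_gap_flags_def by simp

lemma nth_empty_gap_flags: "i < l + p + r + 2 \<Longrightarrow> empty_gap_flags l p r ! i \<longleftrightarrow> l \<le> i \<and> i \<le> l + p"
  unfolding empty_gap_flags_def by (simp del: upt_Suc)

lemma sorted_wrt_filter_rel:
  "sorted_wrt (\<lambda>x y. Q x \<longrightarrow> Q y \<longrightarrow> R x y) xs \<Longrightarrow> sorted_wrt R (filter Q xs)"
  by (induction xs) auto

lemma sorted_list_of_set_strict:
  fixes xs :: "nat list"
  assumes "sorted_wrt (<) xs"
  shows "sorted_list_of_set (set xs) = xs"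
  using assms by (simp add: sorted_list_of_set_sort_remdups strict_sorted_iff distinct_remdups_id
      sorted_sort_id)

lemma filter_append_if_sorted:
  assumes "sorted_wrt (\<lambda>x y. \<not> (Q2 x \<and> Q1 y)) xs" "\<forall>x\<in>set xs. Q x \<longleftrightarrow> Q1 x \<or> Q2 x"
    "\<forall>x. \<not> (Q1 x \<and> Q2 x)"
  shows "filter Q xs = filter Q1 xs @ filter Q2 xs"
  using assms
proof (induction xs)
  case Nil then show ?case by simp
next
  case (Cons x xs)
  have IH: "filter Q xs = filter Q1 xs @ filter Q2 xs" using Cons by auto
  show ?case
  proof (cases "Q2 x")
    case True
    then have "filter Q1 xs = []" using Cons.prems(1) by (auto simp: filter_empty_conv)
    then show ?thesis using IH True Cons.prems by auto
  next
    case False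
    then show ?thesis using IH Cons.prems by auto
  qed
qed

lemma list_eq_by_filters:
  assumes "map Q xs = map Q ys" "filter Q xs = filter Q ys"
    "filter (\<lambda>x. \<not> Q x) xs = filter (\<lambda>x. \<not> Q x) ys"
  shows "xs = ys"
  using assms
proof (induction xs arbitrary: ys)
  case Nil then show ?case by simp
next
  case (Cons x xs)
  then obtain y ys' where ys: "ys = y # ys'" by (cases ys) auto
  then show ?case using Cons by (cases "Q x") auto
qed

lemma sorted_list_of_set_nth_rank:
  fixes W :: "nat set"
  assumes "finite W" "x \<in> W"
  shows "sorted_list_of_set W ! card {w\<in>W. w < x} = x"
proof -
  define xs where "xs = sorted_list_of_set W"
  have s: "sorted_wrt (<) xs" unfolding xs_def by (simp add: strict_sorted_iff)
  have sx: "set xs = W" unfolding xs_def using assms by simp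
  obtain k where k: "k < length xs" "xs ! k = x" using sx assms by (metis in_set_conv_nth)
  have "{w\<in>W. w < x} = set (take k xs)"
  proof
    show "{w\<in>W. w < x} \<subseteq> set (take k xs)"
    proof
      fix w assume "w \<in> {w\<in>W. w < x}"
      then obtain j where j: "j < length xs" "xs ! j = w" "w < x" using sx by (auto simp: in_set_conv_nth)
      have "j < k"
      proof (rule ccontr)
        assume "\<not> j < k"
        then have "xs ! k \<le> xs ! j" using s j k by (metis order_le_less sorted_wrt_iff_nth_less not_less)
        then show False using j k by auto
      qed
      then show "w \<in> set (take k xs)" using j k by (auto simp: in_set_conv_nth)
    qed
    show "set (take k xs) \<subseteq> {w\<in>W. w < x}"
    proof
      fix w assume "w \<in> set (take k xs)"
      then obtain j where j: "j < k" "xs ! j = w" using k by (auto simp: in_set_conv_nth)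
      then have "w < x" using s k sorted_wrt_iff_nth_less by metis
      then show "w \<in> {w\<in>W. w < x}" using j k sx by auto
    qed
  qed
  then have "card {w\<in>W. w < x} = k"
    using k distinct_take[of xs k] s by (simp add: distinct_card strict_sorted_iff)
  then show ?thesis using k xs_def by simp
qed

lemma list_hd_butlast_tl_last: "2 \<le> length xs \<Longrightarrow> xs = hd xs # butlast (tl xs) @ [last xs]"
  by (cases xs) auto

definition ascending :: "nat list \<Rightarrow> nat list" where
  "ascending vs = (if hd vs < last vs then vs else rev vs)"

context
  fixes V E P vs
  assumes finV: "finite V" and part: "chord_partition V E P" and vsP: "vs \<in> P"
    and minV: "Min V \<in> set vs" and len2: "2 \<le> length vs"
begin

abbreviation "lo \<equiv> hd (ascending vs)"
abbreviation "hi \<equiv> last (ascending vs)"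
abbreviation "middle \<equiv> butlast (tl (ascending vs))"

lemma root_distinct: "distinct vs" and root_nonempty: "vs \<noteq> []"
  using chord_partition_distinct[OF part vsP] by auto

lemma root_hd_neq_last: "hd vs \<noteq> last vs"
proof -
  have "vs ! 0 \<noteq> vs ! (length vs - 1)"
    using nth_eq_iff_index_eq[OF root_distinct, of 0 "length vs - 1"] len2 root_nonempty by auto
  then show ?thesis using root_nonempty by (simp add: hd_conv_nth last_conv_nth)
qed

lemma ascending_root:
  "distinct (ascending vs)" "set (ascending vs) = set vs" "walk_in E (ascending vs)"
  "path_edges (ascending vs) = path_edges vs" "length (ascending vs) = length vs"
  "lo < hi" "min (hd vs) (last vs) = lo" "max (hd vs) (last vs) = hi" "ascending vs \<noteq> []"
  using root_distinct chord_partition_walk[OF part vsP] walk_in_rev path_edges_rev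
    root_hd_neq_last root_nonempty
  by (auto simp: ascending_def hd_rev last_rev)

lemma lo_in_root: "lo \<in> set vs" and hi_in_root: "hi \<in> set vs"
  using ascending_root(2,9) by (metis hd_in_set, metis last_in_set)

lemma ascending_root_split: "ascending vs = lo # middle @ [hi]"
  using ascending_root(5) len2 by (intro list_hd_butlast_tl_last) simp

text \<open>An endpoint of another path inside \<open>(lo, hi)\<close> is excluded by the ordering condition, so
  a path starting inside and ending outside would have to cross \<open>vs\<close>.\<close>

lemma root_contains_interval:
  assumes v: "v \<in> V" "lo < v" "v < hi"
  shows "v \<in> set vs"
proof (rule ccontr)
  assume nv: "v \<notin> set vs"
  obtain ws where ws: "ws \<in> P" "v \<in> set ws" using chord_partition_cover[OF part v(1)] by auto
  have wsvs: "ws \<noteq> vs" using ws nv by auto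
  have "\<not> (lo < last ws \<and> last ws < hi)"
    using chord_partition_ordered[OF part] vsP ws(1) wsvs ascending_root(6,7,8)
    unfolding endpoints_ordered_def Let_def by fastforce
  obtain zs where zs: "walk_in E zs" "zs \<noteq> []" "hd zs = v" "last zs = last ws" "set zs \<subseteq> set ws"
    using walk_in_between[OF chord_partition_walk[OF part ws(1)] ws(2), of "last ws"]
      chord_partition_distinct[OF part ws(1)] by auto
  have dj: "set (ascending vs) \<inter> set zs = {}"
    using chord_partition_disjoint[OF part vsP ws(1)] wsvs zs(5) ascending_root(2) by auto
  have "last ws \<notin> set vs"
    using chord_partition_disjoint[OF part vsP ws(1)] wsvs chord_partition_distinct[OF part ws(1)] by auto
  then have "last ws \<noteq> lo" "last ws \<noteq> hi" using lo_in_root hi_in_root by auto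
  then have "strictly_between (hd zs) lo hi \<noteq> strictly_between (last zs) lo hi"
    using zs v ascending_root(6) \<open>\<not> (lo < last ws \<and> last ws < hi)\<close>
    unfolding strictly_between_def by auto
  then show False
    using disjoint_walks_same_side[OF chord_partition_noncrossing[OF part] ascending_root(3) zs(1)
        ascending_root(9) zs(2) dj] by simp
qed

lemma ascending_root_order:
  "sorted_wrt (\<lambda>x y. strictly_between y lo x \<longleftrightarrow> strictly_between hi lo x) (ascending vs)"
  unfolding sorted_wrt_iff_nth_less
proof (intro allI impI)
  fix i j assume ij: "i < j" "j < length (ascending vs)"
  define S1 S2 where "S1 = take (Suc i) (ascending vs)" and "S2 = drop j (ascending vs)"
  have w: "walk_in E S1" "S1 \<noteq> []" "walk_in E S2" "S2 \<noteq> []"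
    unfolding S1_def S2_def using walk_in_take walk_in_drop ascending_root(3,9) ij by auto
  have dj: "set S1 \<inter> set S2 = {}" unfolding S1_def S2_def
    using set_take_disj_set_drop_if_distinct[OF ascending_root(1), of "Suc i" j] ij by auto
  have "hd S1 = lo" "last S1 = ascending vs ! i" "hd S2 = ascending vs ! j" "last S2 = hi"
    unfolding S1_def S2_def using ij ascending_root(9)
    by (auto simp: hd_conv_nth last_conv_nth min_def hd_drop_conv_nth)
  then show "strictly_between (ascending vs ! j) lo (ascending vs ! i) \<longleftrightarrow>
      strictly_between hi lo (ascending vs ! i)"
    using disjoint_walks_same_side[OF chord_partition_noncrossing[OF part] w(1,3,2,4) dj] by simp
qed

lemma edge_within_gap:
  assumes e: "{x, y} \<in> E" "x \<notin> set vs" "y \<notin> set vs"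
    and g: "x \<in> gap V (set vs) w1" "y \<in> gap V (set vs) w2" "w1 \<in> set vs" "w2 \<in> set vs"
  shows "w1 = w2"
proof -
  have False if xy: "{x, y} \<in> E" "x \<in> gap V (set vs) w1" "y \<in> gap V (set vs) w2"
    "w2 \<in> set vs" "w1 < w2" "x \<notin> set vs" "y \<notin> set vs" for x y w1 w2
  proof -
    have xw2: "x < w2" "w2 < y" using xy unfolding gap_def by auto
    have "x \<in> V" using xy unfolding gap_def by auto
    then have mx: "Min V < x" using finV minV xy(6) by (metis Min_le order_le_less)
    obtain zs where zs: "walk_in E zs" "zs \<noteq> []" "hd zs = Min V" "last zs = w2" "set zs \<subseteq> set vs"
      using walk_in_between[OF chord_partition_walk[OF part vsP] minV xy(4)] by auto
    have w: "walk_in E [x, y]" using xy(1) unfolding walk_in_def by (auto simp: less_Suc_eq)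
    have dj: "set [x, y] \<inter> set zs = {}" using zs(5) xy(6,7) by auto
    show False
      using disjoint_walks_same_side[OF chord_partition_noncrossing[OF part] w zs(1) _ zs(2) dj]
        zs xw2 mx unfolding strictly_between_def by auto
  qed
  moreover have "{y, x} \<in> E" using e(1) by (simp add: insert_commute)
  ultimately show ?thesis using e g by (metis linorder_neqE_nat)
qed

lemma path_within_gap:
  assumes ws: "ws \<in> P" "ws \<noteq> vs"
  shows "\<exists>w\<in>set vs. set ws \<subseteq> gap V (set vs) w"
proof -
  have dj: "set vs \<inter> set ws = {}" using chord_partition_disjoint[OF part vsP ws(1)] ws(2) by auto
  have wsne: "ws \<noteq> []" using chord_partition_distinct[OF part ws(1)] by auto
  have own: "\<exists>w\<in>set vs. x \<in> gap V (set vs) w" if "x \<in> set ws" for x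
    using gap_cover[OF _ minV finV] chord_partition_subset[OF part ws(1)] dj that by blast
  have "hd ws \<in> set ws" using wsne by simp
  then obtain w0 where w0: "w0 \<in> set vs" "hd ws \<in> gap V (set vs) w0" using own by blast
  have "ws ! i \<in> gap V (set vs) w0" if "i < length ws" for i
    using that
  proof (induction i)
    case 0 then show ?case using w0 wsne by (simp add: hd_conv_nth)
  next
    case (Suc i)
    obtain w' where w': "w' \<in> set vs" "ws ! Suc i \<in> gap V (set vs) w'"
      using own Suc.prems nth_mem by blast
    have "{ws ! i, ws ! Suc i} \<in> E"
      using chord_partition_walk[OF part ws(1)] Suc.prems unfolding walk_in_def by auto
    moreover have "ws ! i \<notin> set vs" "ws ! Suc i \<notin> set vs"
      using dj Suc.prems nth_mem[of i ws] nth_mem[of "Suc i" ws] by auto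
    ultimately have "w0 = w'" using edge_within_gap Suc w' w0(1) by simp
    then show ?case using w' by simp
  qed
  then show ?thesis using w0 by (metis in_set_conv_nth subsetI)
qed

lemma middle_facts: "distinct middle" "set middle = set vs - {lo, hi}" "length middle = length vs - 2"
proof -
  have d: "distinct (lo # middle @ [hi])" using ascending_root(1) ascending_root_split by metis
  then show "distinct middle" by simp
  have "set (lo # middle @ [hi]) = set vs" using ascending_root(2) ascending_root_split by metis
  then show "set middle = set vs - {lo, hi}" using d by auto
  have "length (lo # middle @ [hi]) = length vs" using ascending_root(5) ascending_root_split by metis
  then show "length middle = length vs - 2" by simp
qed

lemma middle_order: "sorted_wrt (\<lambda>x y. (strictly_between y lo x \<longleftrightarrow> strictly_between hi lo x) \<and> x \<noteq> y) middle"
proof -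
  have "sorted_wrt (\<lambda>x y. strictly_between y lo x \<longleftrightarrow> strictly_between hi lo x) (lo # middle @ [hi])"
    using ascending_root_order ascending_root_split by metis
  then have "sorted_wrt (\<lambda>x y. strictly_between y lo x \<longleftrightarrow> strictly_between hi lo x) middle"
    by (simp add: sorted_wrt_append)
  moreover have "sorted_wrt (\<noteq>) middle"
    using middle_facts(1) unfolding sorted_wrt_iff_nth_less distinct_conv_nth by auto
  ultimately show ?thesis unfolding sorted_wrt_iff_nth_less by blast
qed

lemma filter_middle_inside:
  "filter (\<lambda>x. lo < x \<and> x < hi) middle = sorted_list_of_set {w\<in>set vs. lo < w \<and> w < hi}"
proof -
  have "sorted_wrt (\<lambda>x y. (lo < x \<and> x < hi) \<longrightarrow> (lo < y \<and> y < hi) \<longrightarrow> x < y) middle"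
    using middle_order by (rule sorted_wrt_mono_rel[rotated]) (auto simp: strictly_between_def)
  then have s: "sorted_wrt (<) (filter (\<lambda>x. lo < x \<and> x < hi) middle)" by (rule sorted_wrt_filter_rel)
  have "set (filter (\<lambda>x. lo < x \<and> x < hi) middle) = {w\<in>set vs. lo < w \<and> w < hi}"
    unfolding set_filter middle_facts(2) by auto
  then show ?thesis using sorted_list_of_set_strict[OF s] by simp
qed

lemma filter_middle_outside:
  "filter (\<lambda>x. \<not> (lo < x \<and> x < hi)) middle =
     rev (sorted_list_of_set {w\<in>set vs. w < lo}) @ rev (sorted_list_of_set {w\<in>set vs. hi < w})"
proof -
  note lohi = ascending_root(6)
  have split: "filter (\<lambda>x. \<not> (lo < x \<and> x < hi)) middle = filter (\<lambda>x. x < lo) middle @ filter (\<lambda>x. hi < x) middle"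
  proof (rule filter_append_if_sorted)
    show "sorted_wrt (\<lambda>x y. \<not> (hi < x \<and> y < lo)) middle"
      using middle_order by (rule sorted_wrt_mono_rel[rotated]) (use lohi in \<open>auto simp: strictly_between_def\<close>)
  next
    have "\<forall>x\<in>set middle. x \<noteq> lo \<and> x \<noteq> hi" using middle_facts(2) by auto
    then show "\<forall>x\<in>set middle. \<not> (lo < x \<and> x < hi) \<longleftrightarrow> x < lo \<or> hi < x" by auto
  qed (use lohi in auto)
  have "sorted_wrt (\<lambda>x y. x < lo \<longrightarrow> y < lo \<longrightarrow> y < x) middle"
    "sorted_wrt (\<lambda>x y. hi < x \<longrightarrow> hi < y \<longrightarrow> y < x) middle"
    using middle_order by (rule sorted_wrt_mono_rel[rotated], use lohi in \<open>auto simp: strictly_between_def\<close>)+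
  then have sorted: "sorted_wrt (<) (rev (filter (\<lambda>x. x < lo) middle))"
    "sorted_wrt (<) (rev (filter (\<lambda>x. hi < x) middle))"
    by (simp_all add: sorted_wrt_rev sorted_wrt_filter_rel)
  have "set (rev (filter (\<lambda>x. x < lo) middle)) = {w\<in>set vs. w < lo}"
    "set (rev (filter (\<lambda>x. hi < x) middle)) = {w\<in>set vs. hi < w}"
    unfolding set_rev set_filter middle_facts(2) using lohi by auto
  then have "sorted_list_of_set {w\<in>set vs. w < lo} = rev (filter (\<lambda>x. x < lo) middle)"
    "sorted_list_of_set {w\<in>set vs. hi < w} = rev (filter (\<lambda>x. hi < x) middle)"
    using sorted_list_of_set_strict[OF sorted(1)] sorted_list_of_set_strict[OF sorted(2)] by simp_all
  then show ?thesis using split by simp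
qed

abbreviation "n_below \<equiv> card {w\<in>set vs. w < lo}"
abbreviation "n_inside \<equiv> card {w\<in>set vs. lo < w \<and> w < hi}"
abbreviation "n_above \<equiv> card {w\<in>set vs. hi < w}"
abbreviation "inside_mask \<equiv> {i. i < length middle \<and> lo < middle ! i \<and> middle ! i < hi}"

lemma length_middle: "length middle = n_below + n_inside + n_above"
proof -
  have "length middle = length (filter (\<lambda>x. lo < x \<and> x < hi) middle)
      + length (filter (\<lambda>x. \<not> (lo < x \<and> x < hi)) middle)"
    by (rule sum_length_filter_compl[symmetric])
  then show ?thesis unfolding filter_middle_inside filter_middle_outside by simp
qed

lemma card_root: "card (set vs) = n_below + n_inside + n_above + 2"
  using length_middle middle_facts(3) len2 distinct_card[OF root_distinct] by simp

lemma card_inside_mask: "card inside_mask = n_inside"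
proof -
  have "card inside_mask = length (filter (\<lambda>x. lo < x \<and> x < hi) middle)"
    by (simp add: length_filter_conv_card)
  then show ?thesis unfolding filter_middle_inside by simp
qed

lemma inside_mask_subset: "inside_mask \<subseteq> {0..<n_below + n_inside + n_above}"
  using length_middle by auto

lemma map_middle_inside: "map (\<lambda>x. lo < x \<and> x < hi) middle = map (\<lambda>i. i \<in> inside_mask) [0..<length middle]"
  by (rule nth_equalityI) auto

lemma rank_lo: "sorted_list_of_set (set vs) ! n_below = lo"
  using sorted_list_of_set_nth_rank[of "set vs" lo] lo_in_root by simp

lemma rank_hi: "sorted_list_of_set (set vs) ! (n_below + n_inside + 1) = hi"
proof -
  have eq: "{w\<in>set vs. w < hi} = {w\<in>set vs. w < lo} \<union> ({lo} \<union> {w\<in>set vs. lo < w \<and> w < hi})"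
    using ascending_root(6) lo_in_root by auto
  have "card {w\<in>set vs. w < hi} = n_below + (1 + n_inside)"
    unfolding eq by (subst card_Un_disjoint; (auto)?)+
  then show ?thesis using sorted_list_of_set_nth_rank[of "set vs" hi] hi_in_root by simp
qed

abbreviation "gap_paths w \<equiv> {ws\<in>P - {vs}. set ws \<subseteq> gap V (set vs) w}"

lemma root_gaps_empty:
  assumes "i < length (empty_gap_flags n_below n_inside n_above)"
    and "empty_gap_flags n_below n_inside n_above ! i"
  shows "gap V (set vs) (sorted_list_of_set (set vs) ! i) = {}"
proof (rule gap_empty)
  let ?sl = "sorted_list_of_set (set vs)"
  have i: "n_below \<le> i" "i \<le> n_below + n_inside" "i < length ?sl"
    using assms nth_empty_gap_flags length_empty_gap_flags card_root by auto
  have less: "?sl ! j < ?sl ! k" if "j < k" "k < length ?sl" for j k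
    using that sorted_wrt_iff_nth_less strict_sorted_iff by (metis sorted_list_of_set(2,3))
  show "lo \<le> ?sl ! i" using less[of n_below i] i rank_lo by (cases "n_below = i") auto
  show "?sl ! i < hi" using less[of i "n_below + n_inside + 1"] i rank_hi card_root by simp
  show "hi \<in> set vs" by (rule hi_in_root)
  show "\<forall>v\<in>V. lo < v \<and> v < hi \<longrightarrow> v \<in> set vs" using root_contains_interval by blast
qed

lemma gap_paths_cover:
  assumes w: "w \<in> set vs"
  shows "(\<Union>ws\<in>gap_paths w. set ws) = gap V (set vs) w"
proof
  show "(\<Union>ws\<in>gap_paths w. set ws) \<subseteq> gap V (set vs) w" by blast
  show "gap V (set vs) w \<subseteq> (\<Union>ws\<in>gap_paths w. set ws)"
  proof
    fix v assume v: "v \<in> gap V (set vs) w"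
    obtain ws where ws: "ws \<in> P" "v \<in> set ws"
      using chord_partition_cover[OF part] v gap_subset by blast
    have "ws \<noteq> vs" using ws gap_disjoint[OF v w] by blast
    then obtain w' where w': "w' \<in> set vs" "set ws \<subseteq> gap V (set vs) w'"
      using path_within_gap ws(1) by blast
    then have "w' = w" using gap_unique[OF _ v _ w] ws(2) by blast
    then show "v \<in> (\<Union>ws\<in>gap_paths w. set ws)" using ws w' \<open>ws \<noteq> vs\<close> by blast
  qed
qed

lemma gap_paths_chord_partition:
  "w \<in> set vs \<Longrightarrow> (\<Union>ws\<in>gap_paths w. path_edges ws) \<in> chord_partitions (gap V (set vs) w)"
  using chord_partition_restrict[OF part, of "gap_paths w"] gap_paths_cover
  unfolding chord_partitions_def by auto

lemma other_edges_by_gap: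
  "(\<Union>ws\<in>P - {vs}. path_edges ws) = (\<Union>w\<in>set vs. \<Union>ws\<in>gap_paths w. path_edges ws)"
  using path_within_gap by blast

lemma root_in_gap_layouts:
  "(set vs, \<Union>ws\<in>P - {vs}. path_edges ws) \<in> gap_layouts V (empty_gap_flags n_below n_inside n_above)"
  unfolding gap_layouts_def
  using chord_partition_subset[OF part vsP] card_root length_empty_gap_flags minV root_gaps_empty
    gap_paths_chord_partition other_edges_by_gap
  by (intro CollectI case_prodI conjI exI[of _ "\<lambda>w. \<Union>ws\<in>gap_paths w. path_edges ws"]) auto

end

section \<open>Counting gap layouts\<close>

definition max_chord_partitions :: "nat \<Rightarrow> nat" where
  "max_chord_partitions n = Sup {card (chord_partitions V) | V. finite V \<and> card V = n}"

lemma card_chord_partitions_le_max: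
  assumes "finite V"
  shows "card (chord_partitions V) \<le> max_chord_partitions (card V)"
  unfolding max_chord_partitions_def
proof (rule cSup_upper)
  show "card (chord_partitions V) \<in> {card (chord_partitions V') |V'. finite V' \<and> card V' = card V}"
    using assms by blast
  show "bdd_above {card (chord_partitions V') |V'. finite V' \<and> card V' = card V}"
  proof (rule bdd_aboveI)
    fix x assume "x \<in> {card (chord_partitions V') |V'. finite V' \<and> card V' = card V}"
    then obtain V' where V': "x = card (chord_partitions V')" "finite V'" "card V' = card V" by blast
    then have "x \<le> card (Pow (Pow V'))" using chord_partitions_subset_Pow by (simp add: card_mono)
    then show "x \<le> 2 ^ 2 ^ card V" using V' by (simp add: card_Pow)
  qed
qed

lemma max_chord_partitions_0: "max_chord_partitions 0 = 1"
proof -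
  have "{card (chord_partitions V) |V. finite V \<and> card V = 0} = {1}"
  proof
    show "{card (chord_partitions V) |V. finite V \<and> card V = 0} \<subseteq> {1}"
    proof
      fix c assume "c \<in> {card (chord_partitions V) |V. finite V \<and> card V = 0}"
      then obtain V where "c = card (chord_partitions V)" "finite V" "card V = 0" by blast
      then show "c \<in> {1}" using chord_partitions_empty by simp
    qed
    show "{1} \<subseteq> {card (chord_partitions V) |V. finite V \<and> card V = 0}"
    proof
      fix c :: nat assume "c \<in> {1}"
      then have "c = card (chord_partitions {})" using chord_partitions_empty by simp
      then show "c \<in> {card (chord_partitions V) |V. finite V \<and> card V = 0}"
        using finite.emptyI card.empty by blast
    qed
  qed
  then show ?thesis unfolding max_chord_partitions_def by simp
qed

text \<open>The least element of \<open>W\<close> is \<open>Min V\<close>; its gap consists of the \<open>g\<close> smallest remaining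
  elements of \<open>V\<close>, and the rest of the layout is a layout of what is left.\<close>

fun layout_count :: "bool list \<Rightarrow> nat \<Rightarrow> nat" where
  "layout_count [] m = (if m = 0 then 1 else 0)"
| "layout_count (True # fs) m = (if m = 0 then 0 else layout_count fs (m - 1))"
| "layout_count (False # fs) m = (\<Sum>g<m. max_chord_partitions g * layout_count fs (m - 1 - g))"

lemma gap_layoutsE:
  assumes "x \<in> gap_layouts V fs"
  obtains W E' Eg where "x = (W, E')" "W \<subseteq> V" "card W = length fs" "V \<noteq> {} \<longrightarrow> Min V \<in> W"
    "\<forall>i<length fs. fs ! i \<longrightarrow> gap V W (sorted_list_of_set W ! i) = {}"
    "\<forall>w\<in>W. Eg w \<in> chord_partitions (gap V W w)" "E' = (\<Union>w\<in>W. Eg w)"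
  using assms unfolding gap_layouts_def by blast

lemma finite_gap_layouts:
  assumes "finite V"
  shows "finite (gap_layouts V fs)"
proof -
  have "gap_layouts V fs \<subseteq> Pow V \<times> Pow (Pow V)"
  proof
    fix x assume "x \<in> gap_layouts V fs"
    then obtain W E' Eg where x: "x = (W, E')" "W \<subseteq> V"
      "\<forall>w\<in>W. Eg w \<in> chord_partitions (gap V W w)" "E' = (\<Union>w\<in>W. Eg w)"
      by (rule gap_layoutsE) blast
    then have "Eg w \<subseteq> Pow V" if "w \<in> W" for w
      using that chord_partitions_subset_Pow gap_subset by blast
    then show "x \<in> Pow V \<times> Pow (Pow V)" using x by blast
  qed
  then show ?thesis using assms by (meson finite_Pow_iff finite_SigmaI finite_subset)
qed

lemma card_gap_layouts_Nil:
  assumes "finite V"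
  shows "card (gap_layouts V []) \<le> layout_count [] (card V)"
proof -
  have "gap_layouts V [] \<subseteq> {({}, {})}" and "V \<noteq> {} \<Longrightarrow> gap_layouts V [] = {}"
    using assms by (auto elim!: gap_layoutsE simp: finite_subset)
  show ?thesis
  proof (cases "V = {}")
    case True
    then have "card (gap_layouts V []) \<le> card {({} :: nat set, {} :: nat set set)}"
      using \<open>gap_layouts V [] \<subseteq> _\<close> by (intro card_mono) auto
    then show ?thesis using True by simp
  qed (use \<open>V \<noteq> {} \<Longrightarrow> _\<close> in simp)
qed

lemma gap_layouts_empty_Cons: "gap_layouts {} (f # fs) = {}"
  by (auto elim!: gap_layoutsE)

lemma downward_closed_eq_set_take:
  fixes xs :: "nat list"
  assumes "sorted_wrt (<) xs" "S \<subseteq> set xs" "\<forall>s\<in>S. \<forall>y\<in>set xs. y < s \<longrightarrow> y \<in> S"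
  shows "S = set (take (card S) xs)"
  using assms
proof (induction xs arbitrary: S)
  case Nil then show ?case by simp
next
  case (Cons x xs)
  have sx: "\<forall>y\<in>set xs. x < y" and sxs: "sorted_wrt (<) xs" using Cons.prems(1) by simp_all
  show ?case
  proof (cases "S = {}")
    case True then show ?thesis by simp
  next
    case False
    then obtain s where s: "s \<in> S" by blast
    then have "x = s \<or> x < s" using Cons.prems(2) sx by auto
    then have xS: "x \<in> S" using Cons.prems(3) s by auto
    have "S - {x} \<subseteq> set xs" using Cons.prems(2) by auto
    moreover have "\<forall>s\<in>S - {x}. \<forall>y\<in>set xs. y < s \<longrightarrow> y \<in> S - {x}"
      using Cons.prems(3) sx by fastforce
    ultimately have IH: "S - {x} = set (take (card (S - {x})) xs)"
      using Cons.IH[OF sxs] by blast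
    have "card S = Suc (card (S - {x}))"
      using xS Cons.prems(2) by (metis List.finite_set card_Suc_Diff1 finite_subset)
    then have "set (take (card S) (x # xs)) = insert x (S - {x})" using IH by simp
    then show ?thesis using xS by auto
  qed
qed

context
  fixes V W :: "nat set"
  assumes finV: "finite V" and WV: "W \<subseteq> V" and minW: "Min V \<in> W"
begin

abbreviation "first_gap \<equiv> gap V W (Min V)"
abbreviation "after_first_gap \<equiv> V - insert (Min V) first_gap"

lemma Min_le_vertex: "v \<in> V \<Longrightarrow> Min V \<le> v"
  using finV by simp

lemma gap_after_first_gap:
  assumes w: "w \<in> W - {Min V}"
  shows "gap after_first_gap (W - {Min V}) w = gap V W w"
proof -
  have mw: "Min V < w" using w WV Min_le_vertex by (auto simp: order_le_less)
  have "v \<notin> first_gap" if "w < v" for v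
    using that w mw unfolding gap_def by auto
  then show ?thesis using mw unfolding gap_def by auto
qed

lemma W_subset_after_first_gap: "W - {Min V} \<subseteq> after_first_gap"
  using WV gap_disjoint[OF _ minW] by blast

lemma Min_after_first_gap_in:
  assumes "after_first_gap \<noteq> {}"
  shows "Min after_first_gap \<in> W - {Min V}"
proof (rule ccontr)
  let ?u = "Min after_first_gap"
  have fin: "finite after_first_gap" using finV by simp
  have u: "?u \<in> after_first_gap" using Min_in[OF fin assms] .
  assume "?u \<notin> W - {Min V}"
  then have uW: "?u \<notin> W" using u by auto
  obtain w where w: "w \<in> W" "?u \<in> gap V W w"
    using gap_cover[OF finite_subset[OF WV finV] minW finV _ uW] u by blast
  have "w \<noteq> Min V" using w(2) u by auto
  then have "?u \<le> w" using W_subset_after_first_gap w(1) Min_le[OF fin] by blast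
  moreover have "w < ?u" using w(2) unfolding gap_def by blast
  ultimately show False by simp
qed

lemma first_gap_eq_take:
  defines "xs \<equiv> sorted_list_of_set (V - {Min V})"
  shows "first_gap = set (take (card first_gap) xs)" and "after_first_gap = set (drop (card first_gap) xs)"
proof -
  have sxs: "sorted_wrt (<) xs" and setxs: "set xs = V - {Min V}" and dxs: "distinct xs"
    using finV unfolding xs_def by (simp_all add: strict_sorted_iff)
  have "first_gap \<subseteq> set xs" unfolding setxs gap_def by auto
  moreover have "\<forall>s\<in>first_gap. \<forall>y\<in>set xs. y < s \<longrightarrow> y \<in> first_gap"
    using Min_le_vertex unfolding setxs gap_def by (fastforce simp: order_le_less)
  ultimately show take: "first_gap = set (take (card first_gap) xs)"
    using downward_closed_eq_set_take[OF sxs] by blast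
  have "set xs = set (take (card first_gap) xs) \<union> set (drop (card first_gap) xs)"
    by (metis append_take_drop_id set_append)
  moreover have "set (take (card first_gap) xs) \<inter> set (drop (card first_gap) xs) = {}"
    using set_take_disj_set_drop_if_distinct[OF dxs] by simp
  ultimately show "after_first_gap = set (drop (card first_gap) xs)"
    using take setxs by blast
qed

lemma sorted_list_of_set_first:
  "sorted_list_of_set W = Min V # sorted_list_of_set (W - {Min V})"
proof -
  have fW: "finite W" using finite_subset[OF WV finV] .
  have "Min V \<le> Min W" using Min_in[OF fW] minW WV Min_le_vertex by blast
  then have "Min W = Min V" using Min_le[OF fW minW] by simp
  then show ?thesis using sorted_list_of_set_nonempty[of W] fW minW by auto
qed

end

definition first_gap_pieces :: "nat set \<Rightarrow> bool list \<Rightarrow> nat \<Rightarrow> (nat set \<times> nat set set) set" where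
  "first_gap_pieces V fs g = (let xs = sorted_list_of_set (V - {Min V})
     in (\<lambda>(E0, W', E''). (insert (Min V) W', E0 \<union> E''))
          ` (chord_partitions (set (take g xs)) \<times> gap_layouts (set (drop g xs)) fs))"

lemma gap_layouts_Cons_subset:
  assumes finV: "finite V" and ne: "V \<noteq> {}"
  shows "gap_layouts V (f # fs) \<subseteq> (\<Union>g\<in>(if f then {0} else {..<card V}). first_gap_pieces V fs g)"
proof
  fix x assume "x \<in> gap_layouts V (f # fs)"
  then obtain W E' Eg where W: "x = (W, E')" "W \<subseteq> V" "card W = Suc (length fs)" "Min V \<in> W"
    "\<forall>i<length (f # fs). (f # fs) ! i \<longrightarrow> gap V W (sorted_list_of_set W ! i) = {}"
    "\<forall>w\<in>W. Eg w \<in> chord_partitions (gap V W w)" "E' = (\<Union>w\<in>W. Eg w)"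
    using ne by (elim gap_layoutsE) auto
  define xs where "xs = sorted_list_of_set (V - {Min V})"
  define g where "g = card (gap V W (Min V))"
  note take_drop = first_gap_eq_take[OF finV W(2,4), folded xs_def g_def]
  have "length xs = card V - 1" using finV ne unfolding xs_def by simp
  moreover have "g \<le> length xs" unfolding g_def
    by (subst take_drop(1)) (use card_length[of "take g xs"] in simp)
  moreover have "0 < card V" using finV ne by (simp add: card_gt_0_iff)
  moreover have "f \<longrightarrow> g = 0"
    using W(5) sorted_list_of_set_first[OF finV W(2,4)] unfolding g_def by auto
  ultimately have g: "g \<in> (if f then {0} else {..<card V})" by auto
  have "(W - {Min V}, \<Union>w\<in>W - {Min V}. Eg w) \<in> gap_layouts (set (drop g xs)) fs"
  proof -
    have "gap V W (sorted_list_of_set (W - {Min V}) ! i) = {}" if "i < length fs" "fs ! i" for i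
      using W(5) that sorted_list_of_set_first[OF finV W(2,4)] by auto
    moreover have "sorted_list_of_set (W - {Min V}) ! i \<in> W - {Min V}" if "i < length fs" for i
      using that W(2,3,4) finV by (metis card_Diff_singleton diff_Suc_1 finite_Diff finite_subset
          nth_mem set_sorted_list_of_set sorted_list_of_set.length_sorted_key_list_of_set)
    ultimately show ?thesis
      unfolding gap_layouts_def take_drop(2)[symmetric]
      using W_subset_after_first_gap[OF finV W(2,4)] Min_after_first_gap_in[OF finV W(2,4)]
        gap_after_first_gap[OF finV W(2,4)] W(2,3,4,6) finV
      by (auto simp: card_Diff_singleton finite_subset intro!: exI[of _ Eg])
  qed
  moreover have "Eg (Min V) \<in> chord_partitions (set (take g xs))"
    using W(4,6) take_drop(1) by force
  moreover have "x = (insert (Min V) (W - {Min V}), Eg (Min V) \<union> (\<Union>w\<in>W - {Min V}. Eg w))"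
    using W(1,4,7) by auto
  ultimately have "x \<in> first_gap_pieces V fs g"
    unfolding first_gap_pieces_def xs_def[symmetric] Let_def by force
  then show "x \<in> (\<Union>g\<in>(if f then {0} else {..<card V}). first_gap_pieces V fs g)"
    using g by blast
qed

lemma card_first_gap_pieces_le:
  assumes finV: "finite V" and g: "g < card V"
    and IH: "\<And>V'. finite V' \<Longrightarrow> card (gap_layouts V' fs) \<le> layout_count fs (card V')"
  shows "card (first_gap_pieces V fs g) \<le> max_chord_partitions g * layout_count fs (card V - 1 - g)"
proof -
  define xs where "xs = sorted_list_of_set (V - {Min V})"
  have "V \<noteq> {}" using g by auto
  then have "length xs = card V - 1" "distinct xs"
    using finV unfolding xs_def by simp_all
  then have "card (set (take g xs)) = g" "card (set (drop g xs)) = card V - 1 - g"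
    using g by (simp_all add: distinct_card)
  then have "card (chord_partitions (set (take g xs)) \<times> gap_layouts (set (drop g xs)) fs)
      \<le> max_chord_partitions g * layout_count fs (card V - 1 - g)"
    using card_chord_partitions_le_max[of "set (take g xs)"] IH[of "set (drop g xs)"]
    unfolding card_cartesian_product by (metis List.finite_set mult_le_mono)
  moreover have "finite (chord_partitions (set (take g xs)) \<times> gap_layouts (set (drop g xs)) fs)"
    by (simp add: finite_chord_partitions finite_gap_layouts)
  ultimately show ?thesis
    unfolding first_gap_pieces_def xs_def[symmetric] Let_def by (meson card_image_le order_trans)
qed

lemma card_gap_layouts_le:
  "finite V \<Longrightarrow> card (gap_layouts V fs) \<le> layout_count fs (card V)"
proof (induction fs arbitrary: V)
  case Nil then show ?case by (rule card_gap_layouts_Nil)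
next
  case (Cons f fs)
  show ?case
  proof (cases "V = {}")
    case True then show ?thesis using gap_layouts_empty_Cons by simp
  next
    case ne: False
    define G where "G = (if f then {0} else {..<card V})"
    have cV: "0 < card V" using ne Cons.prems card_gt_0_iff by blast
    have "finite (first_gap_pieces V fs g)" for g
      unfolding first_gap_pieces_def Let_def
      by (intro finite_imageI finite_cartesian_product finite_chord_partitions finite_gap_layouts) simp_all
    then have "card (gap_layouts V (f # fs)) \<le> card (\<Union>g\<in>G. first_gap_pieces V fs g)"
      using gap_layouts_Cons_subset[OF Cons.prems ne] unfolding G_def by (intro card_mono) auto
    also have "\<dots> \<le> (\<Sum>g\<in>G. card (first_gap_pieces V fs g))" by (rule card_UN_le) (simp add: G_def)
    also have "\<dots> \<le> (\<Sum>g\<in>G. max_chord_partitions g * layout_count fs (card V - 1 - g))"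
      using cV by (intro sum_mono card_first_gap_pieces_le[OF Cons.prems _ Cons.IH]) (auto simp: G_def split: if_splits)
    also have "\<dots> = layout_count (f # fs) (card V)"
      using cV max_chord_partitions_0 unfolding G_def by (cases f) auto
    finally show ?thesis .
  qed
qed

section \<open>Decomposition at the least vertex\<close>

definition some_chord_partition :: "nat set \<Rightarrow> nat set set \<Rightarrow> nat list set" where
  "some_chord_partition V E = (SOME P. chord_partition V E P)"

definition root_path :: "nat set \<Rightarrow> nat set set \<Rightarrow> nat list" where
  "root_path V E = (SOME vs. vs \<in> some_chord_partition V E \<and> Min V \<in> set vs)"

definition path_shape :: "nat list \<Rightarrow> nat \<times> nat \<times> nat \<times> nat set" where
  "path_shape vs = (let a = hd (ascending vs); b = last (ascending vs); mid = butlast (tl (ascending vs))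
     in (card {w\<in>set vs. w < a}, card {w\<in>set vs. a < w \<and> w < b}, card {w\<in>set vs. b < w},
         {i. i < length mid \<and> a < mid ! i \<and> mid ! i < b}))"

definition root_class :: "nat set \<Rightarrow> nat \<Rightarrow> nat \<Rightarrow> nat \<Rightarrow> nat set \<Rightarrow> nat set set set" where
  "root_class V l p r M = {E \<in> chord_partitions V.
     2 \<le> length (root_path V E) \<and> path_shape (root_path V E) = (l, p, r, M)}"

definition root_split :: "nat set \<Rightarrow> nat set set \<Rightarrow> nat set \<times> nat set set" where
  "root_split V E = (set (root_path V E), \<Union>ws\<in>some_chord_partition V E - {root_path V E}. path_edges ws)"

lemma root_path:
  assumes "finite V" "V \<noteq> {}" "E \<in> chord_partitions V"
  shows "chord_partition V E (some_chord_partition V E)" "root_path V E \<in> some_chord_partition V E"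
    "Min V \<in> set (root_path V E)"
proof -
  obtain P where "chord_partition V E P" using assms(3) unfolding chord_partitions_def by blast
  then show P: "chord_partition V E (some_chord_partition V E)"
    unfolding some_chord_partition_def by (rule someI)
  have "Min V \<in> V" using assms(1,2) by simp
  then have "\<exists>vs. vs \<in> some_chord_partition V E \<and> Min V \<in> set vs" using chord_partition_cover[OF P] by blast
  then have "root_path V E \<in> some_chord_partition V E \<and> Min V \<in> set (root_path V E)"
    unfolding root_path_def by (rule someI_ex)
  then show "root_path V E \<in> some_chord_partition V E" "Min V \<in> set (root_path V E)" by auto
qed

text \<open>The inner vertices between the endpoints come in increasing order, the others in decreasing
  order below and then above the endpoints; so the shape and the vertex set determine the path.\<close>

lemma ascending_eq_if_same_shape:
  assumes finV: "finite V"
    and p1: "chord_partition V E1 P1" "vs1 \<in> P1" "Min V \<in> set vs1" "2 \<le> length vs1"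
    and p2: "chord_partition V E2 P2" "vs2 \<in> P2" "Min V \<in> set vs2" "2 \<le> length vs2"
    and W: "set vs1 = set vs2" and shape: "path_shape vs1 = path_shape vs2"
  shows "ascending vs1 = ascending vs2"
proof -
  define a1 b1 m1 where "a1 = hd (ascending vs1)" and "b1 = last (ascending vs1)"
    and "m1 = butlast (tl (ascending vs1))"
  define a2 b2 m2 where "a2 = hd (ascending vs2)" and "b2 = last (ascending vs2)"
    and "m2 = butlast (tl (ascending vs2))"
  obtain l p r M where sh: "path_shape vs1 = (l, p, r, M)" by (metis prod_cases4)
  have s1: "card {w\<in>set vs1. w < a1} = l" "card {w\<in>set vs1. a1 < w \<and> w < b1} = p"
    "card {w\<in>set vs1. b1 < w} = r" "{i. i < length m1 \<and> a1 < m1 ! i \<and> m1 ! i < b1} = M"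
    using sh unfolding path_shape_def a1_def b1_def m1_def Let_def by auto
  have s2: "card {w\<in>set vs2. w < a2} = l" "card {w\<in>set vs2. a2 < w \<and> w < b2} = p"
    "card {w\<in>set vs2. b2 < w} = r" "{i. i < length m2 \<and> a2 < m2 ! i \<and> m2 ! i < b2} = M"
    using sh shape unfolding path_shape_def a2_def b2_def m2_def Let_def by auto
  have a: "a1 = a2"
    using rank_lo[OF finV p1] rank_lo[OF finV p2] s1(1) s2(1) W unfolding a1_def a2_def by simp
  have b: "b1 = b2"
    using rank_hi[OF finV p1] rank_hi[OF finV p2] s1 s2 W unfolding a1_def a2_def b1_def b2_def by simp
  have "length m1 = length m2"
    using length_middle[OF finV p1] length_middle[OF finV p2] s1 s2
    unfolding m1_def m2_def a1_def a2_def b1_def b2_def by simp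
  moreover have "map (\<lambda>x. a1 < x \<and> x < b1) m1 = map (\<lambda>i. i \<in> M) [0..<length m1]"
    using map_middle_inside[OF finV p1, folded m1_def a1_def b1_def, unfolded s1(4)] .
  moreover have "map (\<lambda>x. a2 < x \<and> x < b2) m2 = map (\<lambda>i. i \<in> M) [0..<length m2]"
    using map_middle_inside[OF finV p2, folded m2_def a2_def b2_def, unfolded s2(4)] .
  ultimately have "map (\<lambda>x. a1 < x \<and> x < b1) m1 = map (\<lambda>x. a1 < x \<and> x < b1) m2"
    using a b by simp
  moreover have "filter (\<lambda>x. a1 < x \<and> x < b1) m1 = filter (\<lambda>x. a1 < x \<and> x < b1) m2"
    using filter_middle_inside[OF finV p1] filter_middle_inside[OF finV p2] a b W
    unfolding m1_def m2_def a1_def a2_def b1_def b2_def by simp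
  moreover have "filter (\<lambda>x. \<not> (a1 < x \<and> x < b1)) m1 = filter (\<lambda>x. \<not> (a1 < x \<and> x < b1)) m2"
    using filter_middle_outside[OF finV p1] filter_middle_outside[OF finV p2] a b W
    unfolding m1_def m2_def a1_def a2_def b1_def b2_def by simp
  ultimately have "m1 = m2" by (rule list_eq_by_filters)
  then show ?thesis
    using ascending_root_split[OF finV p1] ascending_root_split[OF finV p2] a b
    unfolding m1_def m2_def a1_def a2_def b1_def b2_def by metis
qed

lemma inj_on_root_split:
  assumes finV: "finite V" and ne: "V \<noteq> {}"
  shows "inj_on (root_split V) (root_class V l p r M)"
proof (rule inj_onI)
  fix E1 E2 assume E1: "E1 \<in> root_class V l p r M" and E2: "E2 \<in> root_class V l p r M"
    and eq: "root_split V E1 = root_split V E2"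
  have E: "E1 \<in> chord_partitions V" "E2 \<in> chord_partitions V"
    "2 \<le> length (root_path V E1)" "2 \<le> length (root_path V E2)"
    "path_shape (root_path V E1) = path_shape (root_path V E2)"
    using E1 E2 unfolding root_class_def by auto
  note r1 = root_path[OF finV ne E(1)] and r2 = root_path[OF finV ne E(2)]
  have "ascending (root_path V E1) = ascending (root_path V E2)"
    using ascending_eq_if_same_shape[OF finV r1 E(3) r2 E(4) _ E(5)] eq
    unfolding root_split_def by simp
  then have "path_edges (root_path V E1) = path_edges (root_path V E2)"
    using ascending_root(4)[OF finV r1 E(3)] ascending_root(4)[OF finV r2 E(4)] by simp
  then show "E1 = E2"
    using chord_partition_split[OF r1(1,2)] chord_partition_split[OF r2(1,2)] eq
    unfolding root_split_def by simp
qed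

lemma root_split_in_gap_layouts:
  assumes finV: "finite V" and ne: "V \<noteq> {}"
  shows "root_split V ` root_class V l p r M \<subseteq> gap_layouts V (empty_gap_flags l p r)"
proof
  fix x assume "x \<in> root_split V ` root_class V l p r M"
  then obtain E where E: "E \<in> chord_partitions V" "2 \<le> length (root_path V E)"
    "path_shape (root_path V E) = (l, p, r, M)" "x = root_split V E"
    unfolding root_class_def by blast
  then show "x \<in> gap_layouts V (empty_gap_flags l p r)"
    using root_in_gap_layouts[OF finV root_path[OF finV ne E(1)] E(2)]
    unfolding root_split_def path_shape_def Let_def by simp
qed

lemma root_singleton:
  assumes finV: "finite V" and ne: "V \<noteq> {}" and E: "E \<in> chord_partitions V"
    and short: "\<not> 2 \<le> length (root_path V E)"
  shows "E \<in> chord_partitions (V - {Min V})"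
proof -
  note r = root_path[OF finV ne E]
  define P vs where "P = some_chord_partition V E" and "vs = root_path V E"
  have "vs \<noteq> []" using chord_partition_distinct[OF r(1,2)] vs_def by simp
  then have vs1: "vs = [Min V]" using short r(3) unfolding vs_def[symmetric] by (cases vs) (auto simp: Suc_le_eq)
  have "(\<Union>ws\<in>P - {vs}. set ws) = V - {Min V}"
  proof
    show "(\<Union>ws\<in>P - {vs}. set ws) \<subseteq> V - {Min V}"
      using chord_partition_subset[OF r(1)] chord_partition_disjoint[OF r(1) r(2)] vs1
      unfolding P_def vs_def by fastforce
    show "V - {Min V} \<subseteq> (\<Union>ws\<in>P - {vs}. set ws)"
      using chord_partition_cover[OF r(1)] vs1 unfolding P_def by fastforce
  qed
  moreover have "(\<Union>ws\<in>P - {vs}. path_edges ws) = E"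
    using chord_partition_split[OF r(1,2)] vs1 unfolding P_def vs_def path_edges_def by simp
  ultimately show ?thesis
    using chord_partition_restrict[OF r(1), of "P - {vs}"] unfolding P_def chord_partitions_def by auto
qed

lemma chord_partitions_cover:
  assumes finV: "finite V" and ne: "V \<noteq> {}"
  shows "chord_partitions V \<subseteq> chord_partitions (V - {Min V}) \<union>
    (\<Union>l\<le>card V. \<Union>p\<le>card V. \<Union>r\<le>card V. \<Union>M\<in>{M. M \<subseteq> {0..<l + p + r} \<and> card M = p}.
       root_class V l p r M)"
proof
  fix E assume E: "E \<in> chord_partitions V"
  note r = root_path[OF finV ne E]
  show "E \<in> chord_partitions (V - {Min V}) \<union> (\<Union>l\<le>card V. \<Union>p\<le>card V. \<Union>r\<le>card V.
      \<Union>M\<in>{M. M \<subseteq> {0..<l + p + r} \<and> card M = p}. root_class V l p r M)"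
  proof (cases "2 \<le> length (root_path V E)")
    case False then show ?thesis using root_singleton[OF finV ne E] by blast
  next
    case True
    obtain l p r M where sh: "path_shape (root_path V E) = (l, p, r, M)" by (metis prod_cases4)
    note card_root[OF finV r True] card_inside_mask[OF finV r True] inside_mask_subset[OF finV r True]
    then have "l + p + r + 2 = card (set (root_path V E))" "M \<subseteq> {0..<l + p + r}" "card M = p"
      using sh unfolding path_shape_def Let_def by auto
    moreover have "card (set (root_path V E)) \<le> card V"
      using chord_partition_subset[OF r(1,2)] finV by (simp add: card_mono)
    moreover have "E \<in> root_class V l p r M" unfolding root_class_def using E True sh by simp
    ultimately show ?thesis by (intro UnI2 UN_I) auto
  qed
qed

lemma card_root_class_le:
  assumes "finite V" "V \<noteq> {}"
  shows "card (root_class V l p r M) \<le> layout_count (empty_gap_flags l p r) (card V)"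
proof -
  have "card (root_class V l p r M) = card (root_split V ` root_class V l p r M)"
    using card_image[OF inj_on_root_split[OF assms]] by simp
  also have "\<dots> \<le> card (gap_layouts V (empty_gap_flags l p r))"
    by (rule card_mono[OF finite_gap_layouts[OF assms(1)] root_split_in_gap_layouts[OF assms]])
  also have "\<dots> \<le> layout_count (empty_gap_flags l p r) (card V)"
    by (rule card_gap_layouts_le[OF assms(1)])
  finally show ?thesis .
qed

definition root_count :: "nat \<Rightarrow> nat \<Rightarrow> nat" where
  "root_count K n = (\<Sum>l\<le>K. \<Sum>p\<le>K. \<Sum>r\<le>K. ((l + p + r) choose p) * layout_count (empty_gap_flags l p r) n)"

lemma card_chord_partitions_rec:
  assumes finV: "finite V" and ne: "V \<noteq> {}"
  shows "card (chord_partitions V) \<le> max_chord_partitions (card V - 1) + root_count (card V) (card V)"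
proof -
  define n where "n = card V"
  define Ms where "Ms l p r = {M. M \<subseteq> {0..<l + p + r} \<and> card M = p}" for l p r :: nat
  define U where "U = (\<Union>l\<le>n. \<Union>p\<le>n. \<Union>r\<le>n. \<Union>M\<in>Ms l p r. root_class V l p r M)"
  have fMs: "finite (Ms l p r)" for l p r
    unfolding Ms_def by (rule finite_subset[of _ "Pow {0..<l + p + r}"]) auto
  have cMs: "card (Ms l p r) = (l + p + r) choose p" for l p r
    unfolding Ms_def using n_subsets[of "{0..<l + p + r}" p] by simp
  have "card U \<le> (\<Sum>l\<le>n. \<Sum>p\<le>n. \<Sum>r\<le>n. \<Sum>M\<in>Ms l p r. card (root_class V l p r M))"
    unfolding U_def by (intro card_UN_le[THEN order_trans] sum_mono fMs) simp_all
  also have "\<dots> \<le> (\<Sum>l\<le>n. \<Sum>p\<le>n. \<Sum>r\<le>n. \<Sum>M\<in>Ms l p r. layout_count (empty_gap_flags l p r) n)"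
    unfolding n_def by (intro sum_mono card_root_class_le[OF finV ne])
  also have "\<dots> = root_count n n"
    unfolding root_count_def using cMs by simp
  finally have cU: "card U \<le> root_count n n" .
  have "finite U" using finite_chord_partitions[OF finV] finite_subset
    unfolding U_def root_class_def by (metis (no_types, lifting) UN_subset_iff mem_Collect_eq subsetI)
  then have "card (chord_partitions V) \<le> card (chord_partitions (V - {Min V}) \<union> U)"
    using chord_partitions_cover[OF finV ne] finite_chord_partitions[of "V - {Min V}"] finV
    unfolding U_def Ms_def n_def by (intro card_mono) auto
  also have "\<dots> \<le> card (chord_partitions (V - {Min V})) + card U" by (rule card_Un_le)
  also have "\<dots> \<le> max_chord_partitions (n - 1) + card U"
    using card_chord_partitions_le_max[of "V - {Min V}"] finV ne unfolding n_def by simp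
  finally show ?thesis using cU unfolding n_def by simp
qed

lemma max_chord_partitions_rec:
  assumes "1 \<le> n"
  shows "max_chord_partitions n \<le> max_chord_partitions (n - 1) + root_count n n"
  unfolding max_chord_partitions_def[of n]
proof (rule cSup_least)
  show "{card (chord_partitions V) |V. finite V \<and> card V = n} \<noteq> {}"
  proof -
    have "finite {0..<n}" "card {0..<n} = n" by simp_all
    then show ?thesis by blast
  qed
  fix c assume "c \<in> {card (chord_partitions V) |V. finite V \<and> card V = n}"
  then obtain V where V: "c = card (chord_partitions V)" "finite V" "card V = n" by blast
  then show "c \<le> max_chord_partitions (n - 1) + root_count n n"
    using card_chord_partitions_rec[OF V(2)] assms by fastforce
qed

section \<open>The generating function\<close>

lemma sum_convolution_le_product:
  fixes f h :: "nat \<Rightarrow> real"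
  assumes "\<And>i. 0 \<le> f i" and "\<And>i. 0 \<le> h i"
  shows "(\<Sum>k\<le>K. \<Sum>i\<le>k. f i * h (k - i)) \<le> (\<Sum>i\<le>K. f i) * (\<Sum>j\<le>K. h j)"
proof -
  have "(\<Sum>k\<le>K. \<Sum>i\<le>k. f i * h (k - i)) = (\<Sum>(i, j)\<in>{(i, j). i + j \<le> K}. f i * h j)"
    by (rule sum.triangle_reindex_eq[symmetric])
  also have "\<dots> \<le> (\<Sum>(i, j)\<in>{..K} \<times> {..K}. f i * h j)"
    by (rule sum_mono2) (auto intro: mult_nonneg_nonneg assms)
  also have "\<dots> = (\<Sum>i\<le>K. f i) * (\<Sum>j\<le>K. h j)"
    by (simp add: sum_product sum.cartesian_product)
  finally show ?thesis .
qed

lemma sum_power_le_inverse: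
  fixes x :: real
  assumes "0 \<le> x" "x < 1"
  shows "(\<Sum>i\<le>K. x ^ i) \<le> 1 / (1 - x)"
proof -
  have "(1 - x) * (\<Sum>i\<le>K. x ^ i) = 1 - x ^ Suc K" by (rule sum_gp_basic)
  also have "\<dots> \<le> 1" using assms by simp
  finally show ?thesis using assms by (simp add: field_simps)
qed

lemma sum_choose_power_le:
  fixes x :: real
  assumes x: "0 \<le> x" "x < 1"
  shows "(\<Sum>p\<le>K. real ((q + p) choose p) * x ^ p) \<le> (1 / (1 - x)) ^ Suc q"
proof (induction q arbitrary: K)
  case 0
  then show ?case using sum_power_le_inverse[OF x, of K] by simp
next
  case (Suc q)
  have "real ((Suc q + p) choose p) * x ^ p = (\<Sum>i\<le>p. (real ((q + i) choose i) * x ^ i) * x ^ (p - i))"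
    for p
  proof -
    have "real ((Suc q + p) choose p) = (\<Sum>i\<le>p. real ((q + i) choose i))"
      using sum_choose_lower[of q p] by (simp flip: of_nat_sum)
    then show ?thesis
      by (simp add: sum_distrib_right mult.assoc power_add[symmetric])
  qed
  then have "(\<Sum>p\<le>K. real ((Suc q + p) choose p) * x ^ p)
      = (\<Sum>p\<le>K. \<Sum>i\<le>p. (real ((q + i) choose i) * x ^ i) * x ^ (p - i))"
    by simp
  also have "\<dots> \<le> (\<Sum>i\<le>K. real ((q + i) choose i) * x ^ i) * (\<Sum>j\<le>K. x ^ j)"
    by (rule sum_convolution_le_product) (use x in auto)
  also have "\<dots> \<le> (1 / (1 - x)) ^ Suc q * (1 / (1 - x))"
    by (rule mult_mono[OF Suc.IH sum_power_le_inverse[OF x]]) (use x in \<open>auto intro!: sum_nonneg\<close>)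
  finally show ?case by (simp add: field_simps)
qed

definition partial_gf :: "real \<Rightarrow> nat \<Rightarrow> real" where
  "partial_gf x N = (\<Sum>n\<le>N. real (max_chord_partitions n) * x ^ n)"

lemma partial_gf_nonneg: "0 \<le> x \<Longrightarrow> 0 \<le> partial_gf x N"
  unfolding partial_gf_def by (intro sum_nonneg) simp

lemma partial_gf_mono: "0 \<le> x \<Longrightarrow> N \<le> N' \<Longrightarrow> partial_gf x N \<le> partial_gf x N'"
  unfolding partial_gf_def by (rule sum_mono2) auto

lemma partial_gf_Suc: "partial_gf x (Suc N) = 1 + (\<Sum>n\<le>N. real (max_chord_partitions (Suc n)) * x ^ Suc n)"
  unfolding partial_gf_def by (subst sum.atMost_Suc_shift) (simp add: max_chord_partitions_0)

definition free_flags :: "bool list \<Rightarrow> nat" where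
  "free_flags fs = length (filter Not fs)"

lemma free_flags_empty_gap_flags: "free_flags (empty_gap_flags l p r) = l + r + 1"
proof -
  define f where "f = (\<lambda>i. l \<le> i \<and> i \<le> l + p)"
  have u1: "[0..<l + (p + r + 2)] = [0..<l] @ [l..<l + (p + r + 2)]"
    by (rule upt_add_eq_append) simp
  have u2: "[l..<(l + p + 1) + (r + 1)] = [l..<l + p + 1] @ [l + p + 1..<(l + p + 1) + (r + 1)]"
    by (rule upt_add_eq_append) simp
  have e1: "l + p + r + 2 = l + (p + r + 2)" and e2: "l + (p + r + 2) = (l + p + 1) + (r + 1)" by simp_all
  have u: "[0..<l + p + r + 2] = [0..<l] @ [l..<l + p + 1] @ [l + p + 1..<l + p + r + 2]"
    by (simp only: e1 u1, simp only: e2 u2)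
  have "filter (Not \<circ> f) [0..<l + p + r + 2] = [0..<l] @ [l + p + 1..<l + p + r + 2]"
    unfolding u filter_append
    by (subst filter_True filter_False, auto simp: f_def)+
  then show ?thesis
    unfolding free_flags_def empty_gap_flags_def f_def[symmetric] filter_map length_map
    by (simp del: upt_Suc)
qed

lemma layout_gf_Nil: "(\<Sum>m\<le>M. real (layout_count [] m) * x ^ m) = 1"
proof -
  have "(\<Sum>m\<le>M. real (layout_count [] m) * x ^ m) = (\<Sum>m\<in>{0}. real (layout_count [] m) * x ^ m)"
    by (rule sum.mono_neutral_right) auto
  then show ?thesis by simp
qed

lemma layout_gf_True:
  "(\<Sum>m\<le>Suc K. real (layout_count (True # fs) m) * x ^ m) = x * (\<Sum>m\<le>K. real (layout_count fs m) * x ^ m)"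
  by (subst sum.atMost_Suc_shift) (simp add: sum_distrib_left mult_ac)

lemma layout_gf_False:
  "(\<Sum>m\<le>Suc K. real (layout_count (False # fs) m) * x ^ m)
     = x * (\<Sum>k\<le>K. \<Sum>g\<le>k. (real (max_chord_partitions g) * x ^ g) * (real (layout_count fs (k - g)) * x ^ (k - g)))"
proof -
  have "real (layout_count (False # fs) (Suc k)) * x ^ Suc k
      = x * (\<Sum>g\<le>k. (real (max_chord_partitions g) * x ^ g) * (real (layout_count fs (k - g)) * x ^ (k - g)))"
    for k
  proof -
    have "real (layout_count (False # fs) (Suc k)) * x ^ Suc k
        = (\<Sum>g\<le>k. real (max_chord_partitions g) * real (layout_count fs (k - g)) * x ^ Suc k)"
      by (simp add: lessThan_Suc_atMost sum_distrib_right)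
    also have "\<dots> = (\<Sum>g\<le>k. x * ((real (max_chord_partitions g) * x ^ g) * (real (layout_count fs (k - g)) * x ^ (k - g))))"
    proof (rule sum.cong[OF refl])
      fix g assume "g \<in> {..k}"
      then have xk: "x ^ Suc k = x * (x ^ g * x ^ (k - g))" by (simp add: power_add[symmetric])
      show "real (max_chord_partitions g) * real (layout_count fs (k - g)) * x ^ Suc k
          = x * ((real (max_chord_partitions g) * x ^ g) * (real (layout_count fs (k - g)) * x ^ (k - g)))"
        by (simp only: xk) (simp add: mult_ac)
    qed
    finally show ?thesis by (simp add: sum_distrib_left)
  qed
  then show ?thesis by (subst sum.atMost_Suc_shift) (simp add: sum_distrib_left)
qed

text \<open>With \<open>T = partial_gf x\<close>: a free flag contributes a factor \<open>x T\<close>, a forced one a factor \<open>x\<close>.\<close>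

lemma layout_gf_le:
  fixes x :: real
  assumes x: "0 \<le> x"
  shows "(\<Sum>m\<le>M. real (layout_count fs m) * x ^ m) \<le> x ^ length fs * partial_gf x (M - 1) ^ free_flags fs"
proof (induction fs arbitrary: M)
  case Nil
  show ?case by (simp only: layout_gf_Nil) (simp add: free_flags_def)
next
  case (Cons f fs)
  have T: "0 \<le> partial_gf x N" "partial_gf x (N - 1) \<le> partial_gf x N" for N
    using partial_gf_nonneg[OF x] partial_gf_mono[OF x] by auto
  have IH: "(\<Sum>m\<le>K. real (layout_count fs m) * x ^ m) \<le> x ^ length fs * partial_gf x K ^ free_flags fs" for K
  proof -
    have "x ^ length fs * partial_gf x (K - 1) ^ free_flags fs \<le> x ^ length fs * partial_gf x K ^ free_flags fs"
      using T x by (intro mult_left_mono power_mono) auto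
    then show ?thesis using Cons.IH[of K] by linarith
  qed
  show ?case
  proof (cases M)
    case 0
    have "layout_count (f # fs) 0 = 0" by (cases f) auto
    then show ?thesis using 0 T x by simp
  next
    case (Suc K)
    show ?thesis
    proof (cases f)
      case True
      have "(\<Sum>m\<le>M. real (layout_count (f # fs) m) * x ^ m) = x * (\<Sum>m\<le>K. real (layout_count fs m) * x ^ m)"
        using True unfolding Suc by (simp only: layout_gf_True)
      then show ?thesis using IH[of K] x True Suc by (simp add: free_flags_def mult_left_mono mult.assoc)
    next
      case False
      have "(\<Sum>m\<le>M. real (layout_count (f # fs) m) * x ^ m) = x * (\<Sum>k\<le>K. \<Sum>g\<le>k.
          (real (max_chord_partitions g) * x ^ g) * (real (layout_count fs (k - g)) * x ^ (k - g)))"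
        using False unfolding Suc by (simp only: layout_gf_False)
      also have "\<dots> \<le> x * (partial_gf x K * (\<Sum>j\<le>K. real (layout_count fs j) * x ^ j))"
        unfolding partial_gf_def by (intro mult_left_mono[OF sum_convolution_le_product x]) (use x in auto)
      also have "\<dots> \<le> x * (partial_gf x K * (x ^ length fs * partial_gf x K ^ free_flags fs))"
        by (intro mult_left_mono[OF mult_left_mono[OF IH T(1)] x])
      also have "\<dots> = x ^ length (f # fs) * partial_gf x (M - 1) ^ free_flags (f # fs)"
        using False Suc by (simp add: free_flags_def mult_ac)
      finally show ?thesis .
    qed
  qed
qed

lemma root_count_mono:
  assumes "K \<le> K'"
  shows "root_count K n \<le> root_count K' n"
proof -
  define g where "g l p r = ((l + p + r) choose p) * layout_count (empty_gap_flags l p r) n" for l p r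
  have s: "(\<Sum>i\<le>K. h i) \<le> (\<Sum>i\<le>K'. h i)" for h :: "nat \<Rightarrow> nat"
    using assms by (intro sum_mono2) auto
  have "(\<Sum>l\<le>K. \<Sum>p\<le>K. \<Sum>r\<le>K. g l p r) \<le> (\<Sum>l\<le>K. \<Sum>p\<le>K. \<Sum>r\<le>K'. g l p r)"
    by (intro sum_mono s)
  also have "\<dots> \<le> (\<Sum>l\<le>K. \<Sum>p\<le>K'. \<Sum>r\<le>K'. g l p r)"
    by (intro sum_mono s)
  also have "\<dots> \<le> (\<Sum>l\<le>K'. \<Sum>p\<le>K'. \<Sum>r\<le>K'. g l p r)"
    by (rule s)
  finally show ?thesis unfolding root_count_def g_def .
qed

lemma root_series_le:
  fixes x t :: real
  assumes x: "0 \<le> x" "x < 1" and t: "0 \<le> t" and u: "x * t / (1 - x) < 1"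
  shows "(\<Sum>l\<le>K. \<Sum>p\<le>K. \<Sum>r\<le>K. real ((l + p + r) choose p) * (x ^ (l + p + r + 2) * t ^ (l + r + 1)))
     \<le> x\<^sup>2 * t / ((1 - x) * (1 - x * t / (1 - x))\<^sup>2)"
proof -
  define u c where "u = x * t / (1 - x)" and "c = x\<^sup>2 * t / (1 - x)"
  have u0: "0 \<le> u" and c0: "0 \<le> c" unfolding u_def c_def using x t by simp_all
  have "(\<Sum>p\<le>K. real ((l + p + r) choose p) * (x ^ (l + p + r + 2) * t ^ (l + r + 1)))
      \<le> c * (u ^ l * u ^ r)" for l r
  proof -
    have "(\<Sum>p\<le>K. real ((l + p + r) choose p) * (x ^ (l + p + r + 2) * t ^ (l + r + 1)))
        = (x\<^sup>2 * t * (x * t) ^ (l + r)) * (\<Sum>p\<le>K. real ((l + r + p) choose p) * x ^ p)"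
      by (simp add: sum_distrib_left power_add power_mult_distrib power2_eq_square mult_ac add_ac)
    also have "\<dots> \<le> (x\<^sup>2 * t * (x * t) ^ (l + r)) * (1 / (1 - x)) ^ Suc (l + r)"
      by (rule mult_left_mono[OF sum_choose_power_le[OF x]]) (use x t in simp)
    also have "\<dots> = c * (u ^ l * u ^ r)"
      unfolding u_def c_def using x by (simp add: power_add power_divide field_simps)
    finally show ?thesis .
  qed
  then have "(\<Sum>l\<le>K. \<Sum>p\<le>K. \<Sum>r\<le>K. real ((l + p + r) choose p) * (x ^ (l + p + r + 2) * t ^ (l + r + 1)))
      \<le> (\<Sum>l\<le>K. \<Sum>r\<le>K. c * (u ^ l * u ^ r))"
    by (subst sum.swap[of _ "{..K}" "{..K}"]) (intro sum_mono, simp add: sum.swap[of _ "{..K}"])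
  also have "\<dots> = c * (\<Sum>l\<le>K. \<Sum>r\<le>K. u ^ l * u ^ r)"
    by (simp add: sum_distrib_left)
  also have "\<dots> = c * ((\<Sum>l\<le>K. u ^ l) * (\<Sum>r\<le>K. u ^ r))"
    by (simp only: sum_product)
  also have "\<dots> \<le> c * (1 / (1 - u) * (1 / (1 - u)))"
    using u0 u unfolding u_def[symmetric]
    by (intro mult_left_mono[OF mult_mono] c0 sum_power_le_inverse) (auto intro: sum_nonneg)
  also have "\<dots> = x\<^sup>2 * t / ((1 - x) * (1 - x * t / (1 - x))\<^sup>2)"
    unfolding c_def u_def by (simp add: power2_eq_square)
  finally show ?thesis .
qed

lemma root_count_gf:
  "(\<Sum>m\<le>K. real (root_count K m) * x ^ m) = (\<Sum>l\<le>K. \<Sum>p\<le>K. \<Sum>r\<le>K.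
     real ((l + p + r) choose p) * (\<Sum>m\<le>K. real (layout_count (empty_gap_flags l p r) m) * x ^ m))"
proof -
  have "(\<Sum>m\<le>K. real (root_count K m) * x ^ m) = (\<Sum>m\<le>K. \<Sum>l\<le>K. \<Sum>p\<le>K. \<Sum>r\<le>K.
      real ((l + p + r) choose p) * (real (layout_count (empty_gap_flags l p r) m) * x ^ m))"
    unfolding root_count_def by (simp add: sum_distrib_right mult.assoc)
  also have "\<dots> = (\<Sum>l\<le>K. \<Sum>p\<le>K. \<Sum>r\<le>K. \<Sum>m\<le>K.
      real ((l + p + r) choose p) * (real (layout_count (empty_gap_flags l p r) m) * x ^ m))"
    by (subst sum.swap, rule sum.cong[OF refl], subst sum.swap, rule sum.cong[OF refl], rule sum.swap)
  finally show ?thesis by (simp add: sum_distrib_left)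
qed

lemma root_count_gf_le:
  fixes x :: real
  assumes x: "0 \<le> x" "x < 1" and u: "x * partial_gf x N / (1 - x) < 1"
  shows "(\<Sum>m\<le>Suc N. real (root_count (Suc N) m) * x ^ m)
    \<le> x\<^sup>2 * partial_gf x N / ((1 - x) * (1 - x * partial_gf x N / (1 - x))\<^sup>2)"
proof -
  let ?t = "partial_gf x N"
  have "(\<Sum>m\<le>Suc N. real (layout_count (empty_gap_flags l p r) m) * x ^ m)
      \<le> x ^ (l + p + r + 2) * ?t ^ (l + r + 1)" for l p r
    using layout_gf_le[OF x(1), of "empty_gap_flags l p r" "Suc N"]
    by (simp add: length_empty_gap_flags free_flags_empty_gap_flags)
  then have "(\<Sum>m\<le>Suc N. real (root_count (Suc N) m) * x ^ m) \<le> (\<Sum>l\<le>Suc N. \<Sum>p\<le>Suc N. \<Sum>r\<le>Suc N.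
      real ((l + p + r) choose p) * (x ^ (l + p + r + 2) * ?t ^ (l + r + 1)))"
    unfolding root_count_gf by (intro sum_mono mult_left_mono) simp_all
  also have "\<dots> \<le> x\<^sup>2 * ?t / ((1 - x) * (1 - x * ?t / (1 - x))\<^sup>2)"
    by (rule root_series_le[OF x partial_gf_nonneg[OF x(1)] u])
  finally show ?thesis .
qed

definition gf_majorant :: "real \<Rightarrow> real \<Rightarrow> real" where
  "gf_majorant x t = 1 + x * t + x\<^sup>2 * t / ((1 - x) * (1 - x * t / (1 - x))\<^sup>2)"

lemma partial_gf_Suc_le:
  fixes x :: real
  assumes x: "0 \<le> x" "x < 1" and u: "x * partial_gf x N / (1 - x) < 1"
  shows "partial_gf x (Suc N) \<le> gf_majorant x (partial_gf x N)"
proof -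
  define K where "K = Suc N"
  have "real (max_chord_partitions (Suc n)) * x ^ Suc n
      \<le> real (max_chord_partitions n) * x ^ Suc n + real (root_count K (Suc n)) * x ^ Suc n" if "n \<le> N" for n
  proof -
    have "max_chord_partitions (Suc n) \<le> max_chord_partitions n + root_count (Suc n) (Suc n)"
      using max_chord_partitions_rec[of "Suc n"] by simp
    also have "\<dots> \<le> max_chord_partitions n + root_count K (Suc n)"
      using root_count_mono[of "Suc n" K] that K_def by simp
    finally show ?thesis using x by (simp add: distrib_right[symmetric] mult_right_mono)
  qed
  then have "(\<Sum>n\<le>N. real (max_chord_partitions (Suc n)) * x ^ Suc n)
      \<le> (\<Sum>n\<le>N. real (max_chord_partitions n) * x ^ Suc n + real (root_count K (Suc n)) * x ^ Suc n)"
    by (intro sum_mono) simp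
  also have "\<dots> = x * partial_gf x N + (\<Sum>n\<le>N. real (root_count K (Suc n)) * x ^ Suc n)"
    unfolding partial_gf_def by (simp add: sum.distrib sum_distrib_left mult_ac)
  finally have "partial_gf x (Suc N) \<le> 1 + x * partial_gf x N + (\<Sum>n\<le>N. real (root_count K (Suc n)) * x ^ Suc n)"
    unfolding partial_gf_Suc by simp
  also have "(\<Sum>n\<le>N. real (root_count K (Suc n)) * x ^ Suc n) \<le> (\<Sum>m\<le>K. real (root_count K m) * x ^ m)"
    unfolding K_def by (subst sum.atMost_Suc_shift) simp
  also have "\<dots> \<le> x\<^sup>2 * partial_gf x N / ((1 - x) * (1 - x * partial_gf x N / (1 - x))\<^sup>2)"
    unfolding K_def by (rule root_count_gf_le[OF x u])
  finally show ?thesis unfolding gf_majorant_def by simp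
qed

lemma gf_majorant_mono:
  fixes x t y :: real
  assumes x: "0 \<le> x" "x < 1" and t: "0 \<le> t" "t \<le> y" and uy: "x * y / (1 - x) < 1"
  shows "gf_majorant x t \<le> gf_majorant x y"
proof -
  have ut: "x * t / (1 - x) \<le> x * y / (1 - x)"
    using t x by (intro divide_right_mono mult_left_mono) simp_all
  have p: "0 < 1 - x * y / (1 - x)" using uy by simp
  then have "(1 - x * y / (1 - x))\<^sup>2 \<le> (1 - x * t / (1 - x))\<^sup>2"
    using ut by (intro power_mono) simp_all
  then have "x\<^sup>2 * t / ((1 - x) * (1 - x * t / (1 - x))\<^sup>2) \<le> x\<^sup>2 * y / ((1 - x) * (1 - x * y / (1 - x))\<^sup>2)"
    using p x t by (intro frac_le mult_left_mono) simp_all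
  moreover have "x * t \<le> x * y" using t x by (simp add: mult_left_mono)
  ultimately show ?thesis unfolding gf_majorant_def by simp
qed

text \<open>\<open>187511 / 100000\<close> is a post-fixed point of the majorant at \<open>x = 1 / 4.642126305\<close>,
  so no partial sum of the generating function exceeds it.\<close>

lemma partial_gf_le: "partial_gf (1000000000 / 4642126305) N \<le> 187511 / 100000"
proof (induction N)
  case 0
  then show ?case unfolding partial_gf_def by (simp add: max_chord_partitions_0)
next
  case (Suc N)
  let ?x = "1000000000 / 4642126305 :: real" and ?y = "187511 / 100000 :: real"
  have x: "0 \<le> ?x" "?x < 1" and uy: "?x * ?y / (1 - ?x) < 1" by simp_all
  have t: "0 \<le> partial_gf ?x N" "partial_gf ?x N \<le> ?y"
    using partial_gf_nonneg[OF x(1)] Suc.IH by simp_all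
  have "?x * partial_gf ?x N / (1 - ?x) < 1"
    using t uy by (simp add: divide_simps)
  then have "partial_gf ?x (Suc N) \<le> gf_majorant ?x (partial_gf ?x N)"
    by (rule partial_gf_Suc_le[OF x])
  also have "\<dots> \<le> gf_majorant ?x ?y" by (rule gf_majorant_mono[OF x t uy])
  also have "\<dots> \<le> ?y" unfolding gf_majorant_def by (simp add: field_simps power2_eq_square)
  finally show ?case .
qed

lemma max_chord_partitions_le: "real (max_chord_partitions n) \<le> 187511 / 100000 * 4.642126305 ^ n"
proof -
  let ?x = "1000000000 / 4642126305 :: real"
  have "real (max_chord_partitions n) * ?x ^ n \<le> partial_gf ?x n"
    unfolding partial_gf_def by (rule member_le_sum) auto
  also have "\<dots> \<le> 187511 / 100000" by (rule partial_gf_le)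
  finally have "real (max_chord_partitions n) * ?x ^ n * 4.642126305 ^ n \<le> 187511 / 100000 * 4.642126305 ^ n"
    by (rule mult_right_mono) simp
  moreover have inv: "?x ^ n * 4.642126305 ^ n = 1" by (simp flip: power_mult_distrib)
  have "real (max_chord_partitions n) * ?x ^ n * 4.642126305 ^ n = real (max_chord_partitions n)"
    by (simp only: mult.assoc inv mult_1_right)
  ultimately show ?thesis by linarith
qed

theorem theorem5:
  shows "\<exists>(C::real) (k::nat). \<forall>(n::nat) (S::point set) (num::nat \<Rightarrow> point).
     finite S \<and> card S = n \<and> convex_position S \<and> clockwise_numbering n num S \<longrightarrow>
     real (card {E. ordered_ncp_partition S n num E})
       \<le> C * real (n + 1) ^ k * (4.642126305::real) ^ n"
proof (intro exI allI impI)
  fix n :: nat and S :: "point set" and num :: "nat \<Rightarrow> point"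
  assume "finite S \<and> card S = n \<and> convex_position S \<and> clockwise_numbering n num S"
  then have cw: "clockwise_numbering n num S" by blast
  let ?A = "{E. ordered_ncp_partition S n num E}" and ?index = "inv_into {1..n} num"
  have "inj_on ?index S" using point_index_bij[OF cw] by (simp add: bij_betw_def)
  then have "inj_on (image (image ?index)) (Pow (Pow S))" by (intro inj_on_image_Pow)
  then have "inj_on (image (image ?index)) ?A"
    by (rule inj_on_subset) (use ordered_ncp_partition_imp_chord_partition(1)[OF cw] in blast)
  moreover have "image (image ?index) ` ?A \<subseteq> chord_partitions {1..n}"
    using ordered_ncp_partition_imp_chord_partition(2)[OF cw] by blast
  ultimately have "card ?A \<le> card (chord_partitions {1..n})"
    by (intro card_inj_on_le finite_chord_partitions) simp_all
  also have "\<dots> \<le> max_chord_partitions n"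
    using card_chord_partitions_le_max[of "{1..n}"] by simp
  finally show "real (card ?A) \<le> 187511 / 100000 * real (n + 1) ^ 0 * 4.642126305 ^ n"
    using max_chord_partitions_le[of n] by simp
qed

end
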